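(* Let $d\ge2$, $L\in\mathbb{N}$, and let $f:[0,1)^d\to[0,\infty)$ be an $L$-piecewise constant probability density. Let $X_1,X_2,\dots$ be i.i.d. with density $f$ and let $\ell(\{X_1,\dots,X_n\})$ be the length of a longest chain in $\{X_1,\dots,X_n\}$. Then \[\liminf_{n\to\infty}n^{-1/d}\ell(\{X_1,\dots,X_n\})\ge c_d\bar J\quad\text{almost surely.}\]
   Context: $x\leqq y$ means $x_i\le y_i$ for all $i$; a chain is a subset totally ordered by $\leqq$. For a multiindex $\alpha$ with integer entries $1\le\alpha_i\le L$, $Q_{L,\alpha}=\{x\in[0,1)^d:\alpha-(1,\dots,1)\leqq Lx<\alpha\}$ (strict inequality componentwise); $f$ is $L$-piecewise constant if it is constant on each $Q_{L,\alpha}$. Extend $f$ by $0$ outside $[0,1)^d$. $\mathcal{A}$ is the set of $\gamma\in C^1([0,1];\mathbb{R}^d)$ with all components of $\gamma'(t)$ nonnegative and $\gamma'(t)\ne0$ for every $t$; $J(\gamma)=\int_0^1 f(\gamma(t))^{1/d}(\gamma_1'(t)\cdots\gamma_d'(t))^{1/d}dt$ and $\bar J=\sup_{\gamma\in\mathcal{A}}J(\gamma)$. $c_d$ is the positive constant such that, for i.i.d. uniform points on $[0,1]^d$, $n^{-1/d}$ times the length of a longest chain among the first $n$ points converges almost surely to $c_d$. *)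

theory Defs
  imports "HOL-Probability.Probability"
begin

definition leqq :: "real^'d \<Rightarrow> real^'d \<Rightarrow> bool" where
  "leqq x y \<longleftrightarrow> (\<forall>i. x $ i \<le> y $ i)"

definition is_chain :: "(real^'d) set \<Rightarrow> bool" where
  "is_chain C \<longleftrightarrow> (\<forall>x\<in>C. \<forall>y\<in>C. leqq x y \<or> leqq y x)"

definition lchain :: "(real^'d) set \<Rightarrow> nat" where
  "lchain S = Max (card ` {C. C \<subseteq> S \<and> is_chain C})"

definition unit_cube :: "(real^'d) set" where
  "unit_cube = {x. \<forall>i. 0 \<le> x $ i \<and> x $ i < 1}"

definition Qcube :: "nat \<Rightarrow> ('d \<Rightarrow> nat) \<Rightarrow> (real^'d) set" where
  "Qcube L \<alpha> = {x \<in> unit_cube. \<forall>i. real (\<alpha> i) - 1 \<le> real L * x $ i \<and> real L * x $ i < real (\<alpha> i)}"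

definition piecewise_const :: "nat \<Rightarrow> (real^'d \<Rightarrow> real) \<Rightarrow> bool" where
  "piecewise_const L f \<longleftrightarrow>
     (\<forall>\<alpha>::'d \<Rightarrow> nat. (\<forall>i. 1 \<le> \<alpha> i \<and> \<alpha> i \<le> L) \<longrightarrow> (\<exists>c. \<forall>x\<in>Qcube L \<alpha>. f x = c))"

definition ext0 :: "(real^'d \<Rightarrow> real) \<Rightarrow> real^'d \<Rightarrow> real" where
  "ext0 f x = (if x \<in> unit_cube then f x else 0)"

definition admissible :: "(real \<Rightarrow> real^'d) \<Rightarrow> bool" where
  "admissible \<gamma> \<longleftrightarrow>
     (\<forall>t\<in>{0..1}. \<gamma> differentiable (at t within {0..1})) \<and>
     continuous_on {0..1} (\<lambda>t. vector_derivative \<gamma> (at t within {0..1})) \<and>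
     (\<forall>t\<in>{0..1}. (\<forall>i. vector_derivative \<gamma> (at t within {0..1}) $ i \<ge> 0) \<and>
                  vector_derivative \<gamma> (at t within {0..1}) \<noteq> 0)"

definition Jfun :: "(real^'d \<Rightarrow> real) \<Rightarrow> (real \<Rightarrow> real^'d) \<Rightarrow> real" where
  "Jfun f \<gamma> = integral {0..1} (\<lambda>t.
      ext0 f (\<gamma> t) powr (1 / real CARD('d)) *
      (\<Prod>i\<in>UNIV. vector_derivative \<gamma> (at t within {0..1}) $ i) powr (1 / real CARD('d)))"

definition Jbar :: "(real^'d \<Rightarrow> real) \<Rightarrow> real" where
  "Jbar f = (SUP \<gamma>\<in>{\<gamma>::real \<Rightarrow> real^'d. admissible \<gamma>}. Jfun f \<gamma>)"

text \<open>Uniform distribution on [0,1]^d and the canonical i.i.d. uniform sequence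
  (coordinate process on the infinite product space).\<close>
definition unif_cube :: "(real^'d) measure" where
  "unif_cube = uniform_measure lborel (cbox 0 1)"

definition is_cd :: "('d::finite) itself \<Rightarrow> real \<Rightarrow> bool" where
  "is_cd _ c \<longleftrightarrow> c > 0 \<and>
     (AE \<omega> in PiM UNIV (\<lambda>_::nat. (unif_cube :: (real^'d) measure)).
        (\<lambda>n. real n powr (- 1 / real CARD('d)) * real (lchain (\<omega> ` {..<n}))) \<longlonglongrightarrow> c)"

end

theory Submission
  imports Defs
begin

text \<open>Fix an admissible curve \<open>\<gamma>\<close>. Cutting \<open>[0,1]\<close> at the times where a coordinate of
  \<open>\<gamma>\<close> last stays below or first reaches a grid level \<open>k/L\<close>, each piece of \<open>\<gamma>\<close> either
  contributes nothing to \<open>J(\<gamma>)\<close> or runs inside one open grid cell, where \<open>f\<close> is a constant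
  \<open>a\<close>; by the AM-GM inequality its contribution is at most \<open>(a vol)^(1/d)\<close>, where \<open>vol\<close>
  is the volume of the box spanned by the endpoints of the piece. These boxes are ordered
  increasingly, so chains in different boxes concatenate. The sample points falling into one box,
  mapped affinely onto the unit cube, form an i.i.d. uniform sequence, and by Hoeffding's
  inequality and Borel-Cantelli about \<open>a vol n\<close> of the first \<open>n\<close> points fall into the box; so
  the longest chain inside it eventually has length about \<open>c (a vol n)^(1/d)\<close>. Summing over the
  boxes gives \<open>c J(\<gamma>)\<close> as a lower bound, and countably many curves approximate \<open>Jbar f\<close>.\<close>

section \<open>Longest chains\<close>

lemma finite_chains:
  assumes "finite S"
  shows "finite {C. C \<subseteq> S \<and> is_chain C}"
  using assms by (rule finite_subset[rotated, OF finite_Pow_iff[THEN iffD2]]) auto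

lemma card_le_lchain:
  assumes "finite S" "C \<subseteq> S" "is_chain C"
  shows "card C \<le> lchain S"
  unfolding lchain_def using assms finite_chains[OF assms(1)]
  by (intro Max_ge) auto

lemma obtain_longest_chain:
  assumes "finite S"
  obtains C where "C \<subseteq> S" "is_chain C" "card C = lchain S"
proof -
  have ne: "{C. C \<subseteq> S \<and> is_chain C} \<noteq> {}"
    using is_chain_def by blast
  have "lchain S \<in> card ` {C. C \<subseteq> S \<and> is_chain C}"
    unfolding lchain_def using finite_chains[OF assms] ne by (intro Max_in) auto
  then show ?thesis using that by auto
qed

lemma lchain_le_lchain_image:
  fixes T :: "real^'d \<Rightarrow> real^'e"
  assumes "finite S" "inj_on T S" "\<And>x y. x \<in> S \<Longrightarrow> y \<in> S \<Longrightarrow> leqq x y \<Longrightarrow> leqq (T x) (T y)"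
  shows "lchain S \<le> lchain (T ` S)"
proof -
  obtain C where C: "C \<subseteq> S" "is_chain C" "card C = lchain S" using obtain_longest_chain[OF assms(1)] by blast
  have "is_chain (T ` C)" using C assms(3) unfolding is_chain_def by blast
  moreover have "card (T ` C) = card C" using C assms(2) by (intro card_image) (auto intro: inj_on_subset)
  moreover have "T ` C \<subseteq> T ` S" using C by blast
  moreover have "finite (T ` S)" using assms(1) by simp
  ultimately show ?thesis using C card_le_lchain by metis
qed

lemma sum_lchain_le_lchain:
  fixes S :: "(real^'d) set" and F :: "nat \<Rightarrow> (real^'d) set"
  assumes "finite S" "finite K" "\<And>k. k \<in> K \<Longrightarrow> F k \<subseteq> S"
    and "\<And>k k' x y. k \<in> K \<Longrightarrow> k' \<in> K \<Longrightarrow> k < k' \<Longrightarrow> x \<in> F k \<Longrightarrow> y \<in> F k' \<Longrightarrow> leqq x y"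
    and "\<And>k k'. k \<in> K \<Longrightarrow> k' \<in> K \<Longrightarrow> k \<noteq> k' \<Longrightarrow> F k \<inter> F k' = {}"
  shows "(\<Sum>k\<in>K. lchain (F k)) \<le> lchain S"
proof -
  have "\<forall>k\<in>K. \<exists>C. C \<subseteq> F k \<and> is_chain C \<and> card C = lchain (F k)"
  proof
    fix k assume "k \<in> K"
    then have "finite (F k)" using assms(1,3) finite_subset by blast
    then obtain C where "C \<subseteq> F k" "is_chain C" "card C = lchain (F k)" by (rule obtain_longest_chain)
    then show "\<exists>C. C \<subseteq> F k \<and> is_chain C \<and> card C = lchain (F k)" by blast
  qed
  then obtain C where C: "\<And>k. k \<in> K \<Longrightarrow> C k \<subseteq> F k \<and> is_chain (C k) \<and> card (C k) = lchain (F k)"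
    by (metis (no_types))
  have ch: "is_chain (\<Union>k\<in>K. C k)"
    unfolding is_chain_def
  proof (intro ballI)
    fix x y assume "x \<in> (\<Union>k\<in>K. C k)" "y \<in> (\<Union>k\<in>K. C k)"
    then obtain k k' where k: "k \<in> K" "k' \<in> K" "x \<in> C k" "y \<in> C k'" by blast
    show "leqq x y \<or> leqq y x"
    proof (cases "k = k'")
      case True then show ?thesis using C k unfolding is_chain_def by blast
    next
      case False
      then have "k < k' \<or> k' < k" by arith
      then show ?thesis
      proof
        assume "k < k'" then have "leqq x y" using assms(4)[of k k' x y] C k by blast
        then show ?thesis ..
      next
        assume "k' < k" then have "leqq y x" using assms(4)[of k' k y x] C k by blast
        then show ?thesis ..
      qed
    qed
  qed
  have fin: "\<And>k. k \<in> K \<Longrightarrow> finite (C k)" using C assms(1,3) by (meson finite_subset)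
  have "(\<Sum>k\<in>K. lchain (F k)) = (\<Sum>k\<in>K. card (C k))" using C by simp
  also have "\<dots> = card (\<Union>k\<in>K. C k)"
    using assms(2,5) C fin by (intro card_UN_disjoint[symmetric]) blast+
  also have "\<dots> \<le> lchain S"
    using ch C assms by (intro card_le_lchain) blast+
  finally show ?thesis .
qed

lemma sum_lchain_boxes_le_lchain:
  fixes S :: "(real^'d) set" and u v :: "nat \<Rightarrow> real^'d"
  assumes S: "finite S" and G: "finite G"
    and ord: "\<And>j j' i. j \<in> G \<Longrightarrow> j' \<in> G \<Longrightarrow> j < j' \<Longrightarrow> v j $ i \<le> u j' $ i"
  shows "(\<Sum>j\<in>G. lchain (S \<inter> box (u j) (v j))) \<le> lchain S"
proof (rule sum_lchain_le_lchain[OF S G])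
  fix j j' x y assume jj: "j \<in> G" "j' \<in> G" "j < j'"
    and xy: "x \<in> S \<inter> box (u j) (v j)" "y \<in> S \<inter> box (u j') (v j')"
  show "leqq x y" unfolding leqq_def
  proof
    fix i
    have "x $ i < v j $ i" "u j' $ i < y $ i" using xy by (auto simp: mem_box_cart)
    then show "x $ i \<le> y $ i" using ord[OF jj, of i] by linarith
  qed
next
  have disj: "box (u j) (v j) \<inter> box (u k) (v k) = {}" if jk: "j \<in> G" "k \<in> G" "j < k" for j k
  proof (rule ccontr)
    assume "box (u j) (v j) \<inter> box (u k) (v k) \<noteq> {}"
    then obtain x where "x \<in> box (u j) (v j)" "x \<in> box (u k) (v k)" by blast
    then have "x $ i < v j $ i" "u k $ i < x $ i" for i by (auto simp: mem_box_cart)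
    then show False using ord[OF jk, of undefined] by (meson less_le_trans less_asym)
  qed
  fix j j' assume "j \<in> G" "j' \<in> G" "j \<noteq> j'"
  then show "S \<inter> box (u j) (v j) \<inter> (S \<inter> box (u j') (v j')) = {}"
    using disj[of j j'] disj[of j' j] by (cases "j < j'") auto
qed auto

section \<open>Lower limits\<close>

lemma ereal_le_liminfI:
  fixes f :: "nat \<Rightarrow> real"
  assumes "\<And>y. y < C \<Longrightarrow> eventually (\<lambda>n. y < f n) sequentially"
  shows "ereal C \<le> liminf (\<lambda>n. ereal (f n))"
proof (subst le_Liminf_iff, intro allI impI)
  fix y :: ereal assume "y < ereal C"
  then show "eventually (\<lambda>n. y < ereal (f n)) sequentially"
    by (cases y) (auto intro: eventually_mono[OF assms])
qed

lemma sum_Liminf_le_Liminf_sum: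
  fixes f :: "'i \<Rightarrow> 'a \<Rightarrow> ereal"
  assumes F: "F \<noteq> bot" and I: "finite I" and nonneg: "\<And>i x. i \<in> I \<Longrightarrow> 0 \<le> f i x"
  shows "(\<Sum>i\<in>I. Liminf F (f i)) \<le> Liminf F (\<lambda>x. \<Sum>i\<in>I. f i x)"
  using I nonneg
proof (induction I rule: finite_induct)
  case empty
  show ?case by (simp add: Liminf_const[OF F])
next
  case (insert i I)
  have "(\<Sum>j\<in>insert i I. Liminf F (f j)) \<le> Liminf F (f i) + Liminf F (\<lambda>x. \<Sum>j\<in>I. f j x)"
    using insert by (simp add: add_left_mono)
  also have "\<dots> \<le> Liminf F (\<lambda>x. f i x + (\<Sum>j\<in>I. f j x))"
    using insert.prems by (intro Liminf_add_le[OF F] always_eventually allI sum_nonneg) auto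
  finally show ?case using insert by simp
qed

text \<open>The junk value of a supremum of an unbounded set is harmless here: such a set
  contains elements above any bound.\<close>
lemma exists_gt_Sup_minus:
  fixes S :: "real set"
  assumes "S \<noteq> {}" "e > 0"
  shows "\<exists>s\<in>S. Sup S - e < s"
proof (cases "bdd_above S")
  case True
  then show ?thesis using less_cSup_iff[OF assms(1) True, of "Sup S - e"] assms(2) by simp
next
  case False
  then show ?thesis unfolding bdd_above_def by (meson not_le)
qed

lemma AE_liminf_ge_SUP:
  fixes J :: "'b \<Rightarrow> real" and g :: "'a \<Rightarrow> nat \<Rightarrow> ereal"
  assumes S: "S \<noteq> {}" and c: "c > 0"
    and bound: "\<And>s. s \<in> S \<Longrightarrow> AE \<omega> in M. ereal (c * J s) \<le> liminf (g \<omega>)"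
  shows "AE \<omega> in M. ereal (c * (SUP s\<in>S. J s)) \<le> liminf (g \<omega>)"
proof -
  have "\<forall>m. \<exists>s\<in>S. (SUP s\<in>S. J s) - 1 / real (Suc m) < J s"
    using exists_gt_Sup_minus[of "J ` S"] S by simp
  then obtain s where s: "\<And>m. s m \<in> S" "\<And>m. (SUP s\<in>S. J s) - 1 / real (Suc m) < J (s m)"
    by metis
  have "AE \<omega> in M. \<forall>m. ereal (c * J (s m)) \<le> liminf (g \<omega>)"
    using s(1) bound by (simp add: AE_all_countable)
  then show ?thesis
  proof (rule AE_mp, intro AE_I2 impI)
    fix \<omega> assume all: "\<forall>m. ereal (c * J (s m)) \<le> liminf (g \<omega>)"
    show "ereal (c * (SUP s\<in>S. J s)) \<le> liminf (g \<omega>)"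
    proof (rule ereal_le_epsilon2)
      fix e :: real assume "0 < e"
      then obtain m where m: "inverse (real (Suc m)) < e / c" using c reals_Archimedean by (metis divide_pos_pos)
      have "c * (SUP s\<in>S. J s) < c * J (s m) + c * inverse (real (Suc m))"
        using mult_strict_left_mono[OF s(2)[of m] c] by (simp add: right_diff_distrib inverse_eq_divide)
      also have "c * inverse (real (Suc m)) < e"
        using mult_strict_left_mono[OF m c] c by simp
      finally have "c * (SUP s\<in>S. J s) \<le> c * J (s m) + e" by simp
      then have "ereal (c * (SUP s\<in>S. J s)) \<le> ereal (c * J (s m)) + ereal e" by simp
      also have "\<dots> \<le> liminf (g \<omega>) + ereal e" using all by (intro add_right_mono) auto
      finally show "ereal (c * (SUP s\<in>S. J s)) \<le> liminf (g \<omega>) + ereal e" .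
    qed
  qed
qed

lemma powr_neg_inverse_rescale:
  fixes n N d :: real
  assumes "n > 0" "N > 0"
  shows "n powr (-1/d) = (N / n) powr (1/d) * N powr (-1/d)"
proof -
  have "(N / n) powr (1/d) * N powr (-1/d) = (N powr (1/d) * N powr (-1/d)) / n powr (1/d)"
    using assms by (simp add: powr_divide)
  also have "N powr (1/d) * N powr (-1/d) = 1"
    using assms by (simp add: powr_add[symmetric])
  finally show ?thesis
    using assms by (simp add: powr_minus_divide)
qed

lemma liminf_rescaled_ge_of_counts:
  fixes Lf :: "nat \<Rightarrow> real" and N :: "nat \<Rightarrow> nat" and l :: "nat \<Rightarrow> real" and d c q :: real
  assumes L: "(\<lambda>m. real m powr (-1/d) * Lf m) \<longlonglongrightarrow> c" and c: "c > 0" and q: "q > 0" and d: "d > 0"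
    and count: "\<And>k::nat. eventually (\<lambda>n. (1 - 1 / real (k+2)) * q * real n < real (N n)) sequentially"
    and lge: "\<And>n. Lf (N n) \<le> l n"
  shows "ereal (c * q powr (1/d)) \<le> liminf (\<lambda>n. ereal (real n powr (-1/d) * l n))"
proof (rule ereal_le_liminfI)
  fix y assume y: "y < c * q powr (1/d)"
  define \<rho> where "\<rho> k = 1 - 1 / real (k+2)" for k :: nat
  have "(\<lambda>k. 1 / real (k+2)) \<longlonglongrightarrow> 0"
    using LIMSEQ_ignore_initial_segment[OF lim_const_over_n[of 1], of 2] by (simp add: add.commute)
  then have "\<rho> \<longlonglongrightarrow> 1"
    unfolding \<rho>_def using tendsto_diff[OF tendsto_const] by fastforce
  then have "(\<lambda>k. (\<rho> k * q) powr (1/d) * (\<rho> k * c)) \<longlonglongrightarrow> q powr (1/d) * c"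
    using q by (auto intro!: tendsto_eq_intros)
  then have "eventually (\<lambda>k. y < (\<rho> k * q) powr (1/d) * (\<rho> k * c)) sequentially"
    using y by (intro order_tendstoD(1)) (auto simp: mult.commute)
  then obtain k where k: "y < (\<rho> k * q) powr (1/d) * (\<rho> k * c)"
    by (meson eventually_sequentially order_refl)
  have \<rho>k: "0 < \<rho> k" "\<rho> k < 1" unfolding \<rho>_def by (auto simp: field_simps)
  then have \<rho>q: "0 < \<rho> k * q" using q by simp
  obtain M0 where M0: "\<And>m. m \<ge> M0 \<Longrightarrow> \<rho> k * c < real m powr (-1/d) * Lf m"
    using order_tendstoD(1)[OF L, of "\<rho> k * c"] \<rho>k c by (auto simp: eventually_sequentially)
  have "filterlim (\<lambda>n. \<rho> k * q * real n) at_top sequentially"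
    by (rule filterlim_tendsto_pos_mult_at_top[OF tendsto_const \<rho>q filterlim_real_sequentially])
  then have large: "eventually (\<lambda>n. real M0 + 1 < \<rho> k * q * real n) sequentially"
    by (simp add: filterlim_at_top_dense)
  show "eventually (\<lambda>n. y < real n powr (-1/d) * l n) sequentially"
    using count[of k] large
  proof eventually_elim
    case (elim n)
    have Nn: "\<rho> k * q * real n < real (N n)" using elim(1) by (simp add: \<rho>_def)
    have n: "real n > 0" using elim(2) by (cases "n = 0") auto
    have N: "real (N n) > 0" "M0 \<le> N n" using Nn elim(2) by linarith+
    have "y < (\<rho> k * q) powr (1/d) * (\<rho> k * c)" by (fact k)
    also have "\<dots> \<le> (real (N n) / real n) powr (1/d) * (real (N n) powr (-1/d) * Lf (N n))"
    proof (rule mult_mono)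
      show "(\<rho> k * q) powr (1/d) \<le> (real (N n) / real n) powr (1/d)"
        using Nn n \<rho>q d by (intro powr_mono2) (auto simp: field_simps)
      show "\<rho> k * c \<le> real (N n) powr (-1/d) * Lf (N n)" using M0[OF N(2)] by simp
    qed (use \<rho>k c in auto)
    also have "\<dots> = real n powr (-1/d) * Lf (N n)"
      using powr_neg_inverse_rescale[OF n N(1), of d] by simp
    also have "\<dots> \<le> real n powr (-1/d) * l n"
      using lge[of n] by (intro mult_left_mono) auto
    finally show ?case .
  qed
qed

section \<open>The subsequence of a stream lying in a set\<close>

definition stream_meets :: "'a set \<Rightarrow> 'a stream \<Rightarrow> bool" where
  "stream_meets B \<omega> \<longleftrightarrow> (\<exists>n. \<omega> !! n \<in> B)"

definition first_in :: "'a set \<Rightarrow> 'a stream \<Rightarrow> nat" where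
  "first_in B \<omega> = (LEAST n. \<omega> !! n \<in> B)"

fun nth_in :: "'a set \<Rightarrow> 'a \<Rightarrow> nat \<Rightarrow> 'a stream \<Rightarrow> 'a" where
  "nth_in B d0 0 \<omega> = (if stream_meets B \<omega> then \<omega> !! first_in B \<omega> else d0)"
| "nth_in B d0 (Suc j) \<omega> = (if stream_meets B \<omega> then nth_in B d0 j (sdrop (Suc (first_in B \<omega>)) \<omega>) else d0)"

fun hits_in :: "'a set \<Rightarrow> 'a set list \<Rightarrow> 'a stream \<Rightarrow> bool" where
  "hits_in B [] \<omega> = True"
| "hits_in B (A # As) \<omega> = (\<exists>n. (\<forall>i<n. \<omega> !! i \<notin> B) \<and> \<omega> !! n \<in> A \<and> hits_in B As (sdrop (Suc n) \<omega>))"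

lemma first_in_props:
  assumes "\<omega> !! n \<in> B"
  shows "\<omega> !! first_in B \<omega> \<in> B" "first_in B \<omega> \<le> n" "\<And>i. i < first_in B \<omega> \<Longrightarrow> \<omega> !! i \<notin> B"
  unfolding first_in_def using assms by (auto intro: LeastI Least_le dest: not_less_Least)

lemma hits_in_iff_nth_in:
  assumes "\<forall>A\<in>set As. A \<subseteq> B" "d0 \<notin> B"
  shows "hits_in B As \<omega> \<longleftrightarrow> (\<forall>j<length As. nth_in B d0 j \<omega> \<in> As ! j)"
  using assms(1)
proof (induction As arbitrary: \<omega>)
  case Nil then show ?case by simp
next
  case (Cons A As)
  have AB: "A \<subseteq> B" using Cons.prems by auto
  have IH: "\<And>\<omega>. hits_in B As \<omega> \<longleftrightarrow> (\<forall>j<length As. nth_in B d0 j \<omega> \<in> As ! j)" using Cons by auto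
  have rhs: "(\<forall>j<length (A#As). nth_in B d0 j \<omega> \<in> (A#As) ! j) \<longleftrightarrow>
      nth_in B d0 0 \<omega> \<in> A \<and> (\<forall>j<length As. nth_in B d0 (Suc j) \<omega> \<in> As ! j)"
    by (simp add: All_less_Suc2)
  show ?case
  proof (cases "stream_meets B \<omega>")
    case True
    then obtain n where n: "\<omega> !! n \<in> B" unfolding stream_meets_def by blast
    note F = first_in_props[OF n]
    have "hits_in B (A#As) \<omega> \<longleftrightarrow> \<omega> !! first_in B \<omega> \<in> A \<and> hits_in B As (sdrop (Suc (first_in B \<omega>)) \<omega>)"
    proof
      assume "hits_in B (A#As) \<omega>"
      then obtain m where m: "\<forall>i<m. \<omega> !! i \<notin> B" "\<omega> !! m \<in> A" "hits_in B As (sdrop (Suc m) \<omega>)" by auto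
      have "\<not> m < first_in B \<omega>" using m(2) F(3) AB by blast
      moreover have "\<not> first_in B \<omega> < m" using m(1) F(1) by blast
      ultimately have "m = first_in B \<omega>" by simp
      then show "\<omega> !! first_in B \<omega> \<in> A \<and> hits_in B As (sdrop (Suc (first_in B \<omega>)) \<omega>)" using m by simp
    next
      assume "\<omega> !! first_in B \<omega> \<in> A \<and> hits_in B As (sdrop (Suc (first_in B \<omega>)) \<omega>)"
      then show "hits_in B (A#As) \<omega>" using F(3) by auto
    qed
    then show ?thesis using rhs True IH by simp
  next
    case False
    then have "\<not> hits_in B (A#As) \<omega>" using AB unfolding stream_meets_def by auto
    moreover have "nth_in B d0 0 \<omega> \<notin> A" using False assms(2) AB by auto
    ultimately show ?thesis using rhs by blast
  qed
qed

lemma pred_snth_mem: "B \<in> sets M \<Longrightarrow> Measurable.pred (stream_space M) (\<lambda>\<omega>. \<omega> !! n \<in> B)"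
  by (rule pred_sets2[OF _ measurable_snth])

lemma measurable_stream_meets: "B \<in> sets M \<Longrightarrow> Measurable.pred (stream_space M) (stream_meets B)"
  unfolding stream_meets_def by (intro pred_intros_countable pred_snth_mem)

lemma measurable_first_in: "B \<in> sets M \<Longrightarrow> first_in B \<in> stream_space M \<rightarrow>\<^sub>M count_space UNIV"
  unfolding first_in_def by (rule measurable_Least) (rule pred_snth_mem)

lemma measurable_nth_in:
  assumes B: "B \<in> sets M" and d0: "d0 \<in> space M"
  shows "nth_in B d0 j \<in> stream_space M \<rightarrow>\<^sub>M M"
proof (induction j)
  case 0
  have m1: "(\<lambda>\<omega>. \<omega> !! first_in B \<omega>) \<in> stream_space M \<rightarrow>\<^sub>M M"
    by (rule measurable_compose_countable'[where g="first_in B" and I=UNIV]) (auto intro: measurable_first_in B)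
  have eq: "nth_in B d0 0 = (\<lambda>\<omega>. if stream_meets B \<omega> then \<omega> !! first_in B \<omega> else d0)" by (rule ext) simp
  show ?case unfolding eq
    by (rule measurable_If[OF m1 measurable_const[OF d0]]) (use measurable_stream_meets[OF B] in simp)
next
  case (Suc j)
  have m1: "(\<lambda>\<omega>. nth_in B d0 j (sdrop (Suc (first_in B \<omega>)) \<omega>)) \<in> stream_space M \<rightarrow>\<^sub>M M"
    apply (rule measurable_compose_countable'[where g="first_in B" and I=UNIV])
    apply (rule measurable_compose[OF measurable_sdrop Suc])
    apply (rule measurable_first_in[OF B])
    apply simp
    done
  have eq: "nth_in B d0 (Suc j) = (\<lambda>\<omega>. if stream_meets B \<omega> then nth_in B d0 j (sdrop (Suc (first_in B \<omega>)) \<omega>) else d0)"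
    by (rule ext) simp
  show ?case unfolding eq
    by (rule measurable_If[OF m1 measurable_const[OF d0]]) (use measurable_stream_meets[OF B] in simp)
qed

lemma measurable_hits_in:
  assumes B: "B \<in> sets M" and As: "\<forall>A\<in>set As. A \<in> sets M"
  shows "Measurable.pred (stream_space M) (hits_in B As)"
  using As
proof (induction As)
  case Nil then show ?case by simp
next
  case (Cons A As)
  then have IH: "Measurable.pred (stream_space M) (hits_in B As)" and A: "A \<in> sets M" by auto
  have [measurable]: "Measurable.pred (stream_space M) (\<lambda>\<omega>. hits_in B As (sdrop (Suc n) \<omega>))" for n
    using measurable_compose[OF measurable_sdrop IH] by simp
  have eq: "hits_in B (A#As) = (\<lambda>\<omega>. \<exists>n. (\<forall>i<n. \<omega> !! i \<notin> B) \<and> \<omega> !! n \<in> A \<and> hits_in B As (sdrop (Suc n) \<omega>))"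
    by (rule ext) simp
  have [measurable]: "Measurable.pred (stream_space M) (\<lambda>\<omega>. \<omega> !! n \<in> B)" for n
    using B by (rule pred_snth_mem)
  have [measurable]: "Measurable.pred (stream_space M) (\<lambda>\<omega>. \<omega> !! n \<in> A)" for n
    using A by (rule pred_snth_mem)
  show ?case unfolding eq by measurable
qed

lemma hits_in_Cons_SCons:
  assumes "A \<subseteq> B"
  shows "hits_in B (A#As) (x ## s) \<longleftrightarrow> (x \<in> A \<and> hits_in B As s) \<or> (x \<notin> B \<and> hits_in B (A#As) s)"
proof
  assume "hits_in B (A#As) (x ## s)"
  then obtain n where n: "\<forall>i<n. (x##s) !! i \<notin> B" "(x##s) !! n \<in> A" "hits_in B As (sdrop (Suc n) (x##s))"
    by auto
  show "(x \<in> A \<and> hits_in B As s) \<or> (x \<notin> B \<and> hits_in B (A#As) s)"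
  proof (cases n)
    case 0 then show ?thesis using n by simp
  next
    case (Suc m)
    have "\<forall>i<m. s !! i \<notin> B" using n(1) Suc by (auto dest: spec[of _ "Suc _"])
    moreover have "x \<notin> B" using n(1) Suc by (auto dest: spec[of _ 0])
    ultimately show ?thesis using n Suc by auto
  qed
next
  assume "(x \<in> A \<and> hits_in B As s) \<or> (x \<notin> B \<and> hits_in B (A#As) s)"
  then show "hits_in B (A#As) (x ## s)"
  proof
    assume "x \<in> A \<and> hits_in B As s"
    then show ?thesis by (auto intro!: exI[of _ 0])
  next
    assume h: "x \<notin> B \<and> hits_in B (A#As) s"
    then obtain m where m: "\<forall>i<m. s !! i \<notin> B" "s !! m \<in> A" "hits_in B As (sdrop (Suc m) s)" by auto
    have "\<forall>i<Suc m. (x##s) !! i \<notin> B" using m(1) h by (auto simp: less_Suc_eq_0_disj)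
    then show ?thesis using m by (auto intro!: exI[of _ "Suc m"])
  qed
qed

text \<open>First-step analysis: condition on the first element of the stream.\<close>
lemma emeasure_hits_in_Cons:
  assumes mu: "prob_space \<mu>" and B: "B \<in> sets \<mu>" and A: "A \<in> sets \<mu>" "A \<subseteq> B"
    and As': "\<forall>A\<in>set As. A \<in> sets \<mu> \<and> A \<subseteq> B"
  shows "emeasure (stream_space \<mu>) {\<omega>\<in>space (stream_space \<mu>). hits_in B (A#As) \<omega>}
    = emeasure (stream_space \<mu>) {\<omega>\<in>space (stream_space \<mu>). hits_in B As \<omega>} * emeasure \<mu> A
      + emeasure (stream_space \<mu>) {\<omega>\<in>space (stream_space \<mu>). hits_in B (A#As) \<omega>} * emeasure \<mu> (space \<mu> - B)"
proof -
  interpret prob_space \<mu> by fact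
  define E where "E = {\<omega>\<in>space (stream_space \<mu>). hits_in B (A#As) \<omega>}"
  define E' where "E' = {\<omega>\<in>space (stream_space \<mu>). hits_in B As \<omega>}"
  have Em: "E \<in> sets (stream_space \<mu>)" unfolding E_def
    by (rule predE, rule measurable_hits_in) (use B A As' in auto)
  have E'm: "E' \<in> sets (stream_space \<mu>)" unfolding E'_def
    by (rule predE, rule measurable_hits_in) (use B As' in auto)
  have Bc: "space \<mu> - B \<in> sets \<mu>" using B by auto
  have pt: "indicator E (x ## s) = indicator A x * indicator E' s + indicator (space \<mu> - B) x * (indicator E s :: ennreal)"
    if x: "x \<in> space \<mu>" and s: "s \<in> space (stream_space \<mu>)" for x s
  proof -
    have xs: "x ## s \<in> space (stream_space \<mu>)" using x s by (simp add: space_stream_space)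
    have "hits_in B (A#As) (x ## s) \<longleftrightarrow> (x \<in> A \<and> hits_in B As s) \<or> (x \<notin> B \<and> hits_in B (A#As) s)"
      by (rule hits_in_Cons_SCons[OF A(2)])
    then have "x ## s \<in> E \<longleftrightarrow> (x \<in> A \<and> s \<in> E') \<or> (x \<in> space \<mu> - B \<and> s \<in> E)"
      using xs s x unfolding E_def E'_def by blast
    moreover have "\<not> (x \<in> A \<and> x \<in> space \<mu> - B)" using A(2) by blast
    ultimately show ?thesis by (auto simp: indicator_def simp del: hits_in.simps)
  qed
  have "emeasure (stream_space \<mu>) E = (\<integral>\<^sup>+\<omega>. indicator E \<omega> \<partial>stream_space \<mu>)"
    using Em by simp
  also have "\<dots> = (\<integral>\<^sup>+x. \<integral>\<^sup>+s. indicator E (x ## s) \<partial>stream_space \<mu> \<partial>\<mu>)"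
    by (rule nn_integral_stream_space) (use Em in simp)
  also have "\<dots> = (\<integral>\<^sup>+x. \<integral>\<^sup>+s. (indicator A x * indicator E' s + indicator (space \<mu> - B) x * indicator E s)
                  \<partial>stream_space \<mu> \<partial>\<mu>)"
    by (intro nn_integral_cong) (simp add: pt)
  also have "\<dots> = (\<integral>\<^sup>+x. (indicator A x * emeasure (stream_space \<mu>) E' +
                    indicator (space \<mu> - B) x * emeasure (stream_space \<mu>) E) \<partial>\<mu>)"
  proof (intro nn_integral_cong)
    fix x
    have "(\<integral>\<^sup>+s. (indicator A x * indicator E' s + indicator (space \<mu> - B) x * indicator E s) \<partial>stream_space \<mu>)
        = (\<integral>\<^sup>+s. indicator A x * indicator E' s \<partial>stream_space \<mu>) + (\<integral>\<^sup>+s. indicator (space \<mu> - B) x * indicator E s \<partial>stream_space \<mu>)"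
      by (rule nn_integral_add) (use Em E'm in auto)
    also have "\<dots> = indicator A x * emeasure (stream_space \<mu>) E' + indicator (space \<mu> - B) x * emeasure (stream_space \<mu>) E"
      by (simp only: nn_integral_cmult_indicator[OF E'm] nn_integral_cmult_indicator[OF Em])
    finally show "(\<integral>\<^sup>+s. (indicator A x * indicator E' s + indicator (space \<mu> - B) x * indicator E s) \<partial>stream_space \<mu>)
        = indicator A x * emeasure (stream_space \<mu>) E' + indicator (space \<mu> - B) x * emeasure (stream_space \<mu>) E" .
  qed
  also have "\<dots> = emeasure (stream_space \<mu>) E' * emeasure \<mu> A + emeasure (stream_space \<mu>) E * emeasure \<mu> (space \<mu> - B)"
  proof -
    have t: "(\<integral>\<^sup>+x. indicator C x * c \<partial>\<mu>) = c * emeasure \<mu> C" if "C \<in> sets \<mu>" for C c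
    proof -
      have "(\<integral>\<^sup>+x. indicator C x * c \<partial>\<mu>) = (\<integral>\<^sup>+x. c * indicator C x \<partial>\<mu>)" by (simp add: mult.commute)
      also have "\<dots> = c * emeasure \<mu> C" by (rule nn_integral_cmult_indicator[OF that])
      finally show ?thesis .
    qed
    show ?thesis by (subst nn_integral_add) (use A Bc in \<open>auto simp: t\<close>)
  qed
  finally show ?thesis unfolding E_def E'_def .
qed

lemma prob_hits_in:
  assumes mu: "prob_space \<mu>" and B: "B \<in> sets \<mu>" and q: "measure \<mu> B > 0"
    and As: "\<forall>A\<in>set As. A \<in> sets \<mu> \<and> A \<subseteq> B"
  shows "measure (stream_space \<mu>) {\<omega>\<in>space (stream_space \<mu>). hits_in B As \<omega>}
           = (\<Prod>A\<leftarrow>As. measure \<mu> A / measure \<mu> B)"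
  using As
proof (induction As)
  case Nil
  interpret S: prob_space "stream_space \<mu>" using mu by (rule prob_space.prob_space_stream_space)
  show ?case by (simp add: S.prob_space)
next
  case (Cons A As)
  interpret prob_space \<mu> by fact
  interpret S: prob_space "stream_space \<mu>" by (rule prob_space_stream_space)
  have A: "A \<in> sets \<mu>" "A \<subseteq> B" and As': "\<forall>A\<in>set As. A \<in> sets \<mu> \<and> A \<subseteq> B" using Cons.prems by auto
  define E where "E = {\<omega>\<in>space (stream_space \<mu>). hits_in B (A#As) \<omega>}"
  define E' where "E' = {\<omega>\<in>space (stream_space \<mu>). hits_in B As \<omega>}"
  note eq = emeasure_hits_in_Cons[OF mu B A As', folded E_def E'_def]
  define p where "p = S.prob E"
  define r where "r = S.prob E'"
  define a where "a = prob A"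
  define qq where "qq = prob B"
  have e0: "prob (space \<mu> - B) = 1 - qq"
    using B by (simp add: prob_compl qq_def)
  have nn: "0 \<le> p" "0 \<le> r" "0 \<le> a" "0 \<le> 1 - qq"
    unfolding p_def r_def a_def qq_def by (auto simp: prob_le_1)
  from eq have "ennreal p = ennreal r * ennreal a + ennreal p * ennreal (prob (space \<mu> - B))"
    unfolding p_def r_def a_def S.emeasure_eq_measure emeasure_eq_measure .
  then have "ennreal p = ennreal r * ennreal a + ennreal p * ennreal (1 - qq)"
    by (simp only: e0)
  also have "\<dots> = ennreal (r * a + p * (1 - qq))"
    using nn by (simp add: ennreal_plus ennreal_mult)
  finally have "p = r * a + p * (1 - qq)"
    using nn by (subst (asm) ennreal_inj) auto
  then have "p = a / qq * r" using q by (simp add: field_simps qq_def)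
  then show ?case using Cons.IH[OF As'] unfolding p_def r_def a_def qq_def E_def E'_def by simp
qed

lemma AE_nth_in_mem:
  assumes mu: "prob_space \<mu>" and B: "B \<in> sets \<mu>" and q: "measure \<mu> B > 0" and d0: "d0 \<notin> B"
  shows "AE \<omega> in stream_space \<mu>. \<forall>j. nth_in B d0 j \<omega> \<in> B"
proof -
  interpret S: prob_space "stream_space \<mu>" using mu by (rule prob_space.prob_space_stream_space)
  have "AE \<omega> in stream_space \<mu>. \<forall>j<K. nth_in B d0 j \<omega> \<in> B" for K
  proof -
    let ?Z = "{\<omega>\<in>space (stream_space \<mu>). hits_in B (replicate K B) \<omega>}"
    have "?Z \<in> sets (stream_space \<mu>)" by (rule predE, rule measurable_hits_in) (use B in auto)
    moreover have "S.prob ?Z = 1" using prob_hits_in[OF mu B q, of "replicate K B"] B q by simp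
    ultimately have "AE \<omega> in stream_space \<mu>. \<omega> \<in> ?Z" by (subst S.AE_in_set_eq_1)
    then show ?thesis
      by (rule AE_mp) (use hits_in_iff_nth_in[of "replicate K B" B d0] d0 in auto)
  qed
  then have "AE \<omega> in stream_space \<mu>. \<forall>K. \<forall>j<K. nth_in B d0 j \<omega> \<in> B"
    by (simp add: AE_all_countable)
  then show ?thesis by (rule AE_mp) (auto intro: lessI)
qed

lemma distr_nth_in_stream:
  fixes \<mu> :: "'a measure" and \<nu> :: "'b measure"
  assumes mu: "prob_space \<mu>" and B: "B \<in> sets \<mu>" and q: "measure \<mu> B > 0"
    and d0: "d0 \<in> space \<mu>" "d0 \<notin> B"
    and nu: "prob_space \<nu>" and G: "G \<in> \<mu> \<rightarrow>\<^sub>M \<nu>"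
    and law: "\<And>Y. Y \<in> sets \<nu> \<Longrightarrow> measure \<mu> (G -` Y \<inter> B) / measure \<mu> B = measure \<nu> Y"
  shows "distr (stream_space \<mu>) (PiM UNIV (\<lambda>_::nat. \<nu>)) (\<lambda>\<omega> j. G (nth_in B d0 j \<omega>)) = PiM UNIV (\<lambda>_. \<nu>)"
proof -
  interpret mu: prob_space \<mu> by fact
  interpret S: prob_space "stream_space \<mu>" by (rule mu.prob_space_stream_space)
  interpret nu: prob_space \<nu> by fact
  interpret P: product_prob_space "\<lambda>_::nat. \<nu>" UNIV by unfold_locales
  define \<Phi> where "\<Phi> = (\<lambda>\<omega> (j::nat). G (nth_in B d0 j \<omega>))"
  have Wm: "nth_in B d0 j \<in> stream_space \<mu> \<rightarrow>\<^sub>M \<mu>" for j by (rule measurable_nth_in[OF B d0(1)])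
  have Phim: "\<Phi> \<in> stream_space \<mu> \<rightarrow>\<^sub>M PiM UNIV (\<lambda>_. \<nu>)"
    unfolding \<Phi>_def by (rule measurable_PiM_single') (auto intro: measurable_compose[OF Wm G] measurable_space)
  show ?thesis unfolding \<Phi>_def[symmetric]
  proof (rule P.PiM_eq)
    show "sets (distr (stream_space \<mu>) (Pi\<^sub>M UNIV (\<lambda>_. \<nu>)) \<Phi>) = sets (Pi\<^sub>M UNIV (\<lambda>_. \<nu>))" by simp
  next
    fix J :: "nat set" and F assume J: "finite J" "J \<subseteq> UNIV" and F: "\<And>j. j \<in> J \<Longrightarrow> F j \<in> sets \<nu>"
    define K where "K = (if J = {} then 0 else Suc (Max J))"
    have JK: "j \<in> J \<Longrightarrow> j < K" for j using J by (auto simp: K_def less_Suc_eq_le)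
    define As where "As = map (\<lambda>j. if j \<in> J then G -` F j \<inter> B else B) [0..<K]"
    have AsB: "\<forall>A\<in>set As. A \<in> sets \<mu> \<and> A \<subseteq> B"
    proof
      fix A assume "A \<in> set As"
      then obtain j where "j < K" "A = (if j \<in> J then G -` F j \<inter> B else B)" unfolding As_def by auto
      moreover have "G -` F j \<inter> B \<in> sets \<mu>" if "j \<in> J"
      proof -
        have "G -` F j \<inter> space \<mu> \<in> sets \<mu>" using measurable_sets[OF G F[OF that]] .
        then have "(G -` F j \<inter> space \<mu>) \<inter> B \<in> sets \<mu>" using B by blast
        moreover have "(G -` F j \<inter> space \<mu>) \<inter> B = G -` F j \<inter> B" using sets.sets_into_space[OF B] by blast
        ultimately show ?thesis by simp
      qed
      ultimately show "A \<in> sets \<mu> \<and> A \<subseteq> B" using B by auto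
    qed
    define H where "H = {\<omega>\<in>space (stream_space \<mu>). hits_in B As \<omega>}"
    define E where "E = \<Phi> -` prod_emb UNIV (\<lambda>_. \<nu>) J (Pi\<^sub>E J F) \<inter> space (stream_space \<mu>)"
    have Hm: "H \<in> sets (stream_space \<mu>)" unfolding H_def
      by (rule predE, rule measurable_hits_in) (use B AsB in auto)
    have embm: "prod_emb UNIV (\<lambda>_. \<nu>) J (Pi\<^sub>E J F) \<in> sets (PiM UNIV (\<lambda>_. \<nu>))"
      using J F by (intro sets_PiM_I) auto
    have Em: "E \<in> sets (stream_space \<mu>)" unfolding E_def using measurable_sets[OF Phim embm] .
    have Ech: "\<omega> \<in> E \<longleftrightarrow> (\<forall>j\<in>J. G (nth_in B d0 j \<omega>) \<in> F j)" if "\<omega> \<in> space (stream_space \<mu>)" for \<omega>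
      using that measurable_space[OF Phim that] measurable_space[OF G measurable_space[OF Wm that]]
      unfolding E_def prod_emb_def \<Phi>_def by (auto simp: PiE_iff)
    have Hch: "hits_in B As \<omega> \<longleftrightarrow> (\<forall>j<K. nth_in B d0 j \<omega> \<in> (if j \<in> J then G -` F j \<inter> B else B))" for \<omega>
      using hits_in_iff_nth_in[of As B d0 \<omega>] AsB d0(2) unfolding As_def by auto
    have "AE \<omega> in stream_space \<mu>. \<omega> \<in> E \<longleftrightarrow> \<omega> \<in> H"
      using AE_nth_in_mem[OF mu B q d0(2)]
    proof (rule AE_mp, intro AE_I2 impI)
      fix \<omega> assume "\<omega> \<in> space (stream_space \<mu>)" "\<forall>j. nth_in B d0 j \<omega> \<in> B"
      then show "\<omega> \<in> E \<longleftrightarrow> \<omega> \<in> H" unfolding H_def using Ech Hch JK by auto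
    qed
    then have "emeasure (stream_space \<mu>) E = emeasure (stream_space \<mu>) H"
      by (rule emeasure_eq_AE) (use Em Hm in auto)
    also have "\<dots> = ennreal (\<Prod>A\<leftarrow>As. measure \<mu> A / measure \<mu> B)"
      using prob_hits_in[OF mu B q AsB] unfolding H_def by (simp add: S.emeasure_eq_measure)
    also have "(\<Prod>A\<leftarrow>As. measure \<mu> A / measure \<mu> B) = (\<Prod>j\<in>{0..<K}. (if j \<in> J then measure \<nu> (F j) else 1))"
    proof -
      have "(\<Prod>A\<leftarrow>As. measure \<mu> A / measure \<mu> B) = (\<Prod>j\<leftarrow>[0..<K]. measure \<mu> (if j \<in> J then G -` F j \<inter> B else B) / measure \<mu> B)"
        unfolding As_def by (simp add: comp_def)
      also have "\<dots> = (\<Prod>j\<in>{0..<K}. measure \<mu> (if j \<in> J then G -` F j \<inter> B else B) / measure \<mu> B)"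
        by (subst prod.distinct_set_conv_list[symmetric]) auto
      also have "\<dots> = (\<Prod>j\<in>{0..<K}. (if j \<in> J then measure \<nu> (F j) else 1))"
        using q by (intro prod.cong refl) (auto simp: law F)
      finally show ?thesis .
    qed
    also have "(\<Prod>j\<in>{0..<K}. (if j \<in> J then measure \<nu> (F j) else 1)) = (\<Prod>j\<in>J. measure \<nu> (F j))"
    proof -
      have "J \<subseteq> {0..<K}" using JK by auto
      then show ?thesis by (subst prod.If_cases) (auto simp: Int_absorb1)
    qed
    also have "ennreal (\<Prod>j\<in>J. measure \<nu> (F j)) = (\<Prod>j\<in>J. emeasure \<nu> (F j))"
      by (simp add: prod_ennreal nu.emeasure_eq_measure)
    finally have "emeasure (stream_space \<mu>) E = (\<Prod>j\<in>J. emeasure \<nu> (F j))" .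
    then show "emeasure (distr (stream_space \<mu>) (Pi\<^sub>M UNIV (\<lambda>_. \<nu>)) \<Phi>) (prod_emb UNIV (\<lambda>_. \<nu>) J (Pi\<^sub>E J F)) =
        (\<Prod>j\<in>J. emeasure \<nu> (F j))"
      by (subst emeasure_distr[OF Phim embm]) (simp add: E_def)
  qed
qed

definition count_in :: "'a set \<Rightarrow> nat \<Rightarrow> 'a stream \<Rightarrow> nat" where
  "count_in B n \<omega> = length (filter (\<lambda>x. x \<in> B) (stake n \<omega>))"

lemma filter_stake_first_in:
  assumes "\<And>i. i < h \<Longrightarrow> \<omega> !! i \<notin> B" "\<omega> !! h \<in> B" "h < n"
  shows "filter (\<lambda>x. x \<in> B) (stake n \<omega>) = \<omega> !! h # filter (\<lambda>x. x \<in> B) (stake (n - Suc h) (sdrop (Suc h) \<omega>))"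
proof -
  have nn: "Suc h + (n - Suc h) = n" using assms(3) by simp
  have "stake n \<omega> = stake (Suc h) \<omega> @ stake (n - Suc h) (sdrop (Suc h) \<omega>)"
    using stake_add[of "Suc h" \<omega> "n - Suc h"] unfolding nn by (rule sym)
  then have e: "stake n \<omega> = stake h \<omega> @ [\<omega> !! h] @ stake (n - Suc h) (sdrop (Suc h) \<omega>)"
    unfolding stake_Suc by simp
  have "filter (\<lambda>x. x \<in> B) (stake h \<omega>) = []"
    using assms(1) by (auto simp: filter_empty_conv in_set_conv_nth)
  then show ?thesis unfolding e using assms(2) by (simp del: stake.simps sdrop.simps)
qed

lemma nth_in_eq_nth_filter:
  assumes "j < count_in B n \<omega>"
  shows "nth_in B d0 j \<omega> = filter (\<lambda>x. x \<in> B) (stake n \<omega>) ! j"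
  using assms
proof (induction j arbitrary: \<omega> n)
  case (0 \<omega> n) note c = this
  have "filter (\<lambda>x. x \<in> B) (stake n \<omega>) \<noteq> []" using c by (auto simp: count_in_def)
  then obtain i where i: "i < n" "\<omega> !! i \<in> B" by (auto simp: filter_empty_conv in_set_conv_nth)
  note F = first_in_props[OF i(2)]
  have hh: "stream_meets B \<omega>" using i unfolding stream_meets_def by blast
  show ?case using filter_stake_first_in[OF F(3) F(1)] F(2) i(1) hh by simp
next
  case (Suc j \<omega> n) note c = this
  have "filter (\<lambda>x. x \<in> B) (stake n \<omega>) \<noteq> []" using c by (auto simp: count_in_def)
  then obtain i where i: "i < n" "\<omega> !! i \<in> B" by (auto simp: filter_empty_conv in_set_conv_nth)
  note F = first_in_props[OF i(2)]
  have hh: "stream_meets B \<omega>" using i unfolding stream_meets_def by blast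
  have eq: "filter (\<lambda>x. x \<in> B) (stake n \<omega>) = \<omega> !! first_in B \<omega> # filter (\<lambda>x. x \<in> B) (stake (n - Suc (first_in B \<omega>)) (sdrop (Suc (first_in B \<omega>)) \<omega>))"
    using filter_stake_first_in[OF F(3) F(1)] F(2) i(1) by simp
  have "j < count_in B (n - Suc (first_in B \<omega>)) (sdrop (Suc (first_in B \<omega>)) \<omega>)"
    using c(2) unfolding count_in_def eq by simp
  from c(1)[OF this] show ?case using hh eq by simp
qed

lemma set_filter_stake_eq_nth_in:
  "set (filter (\<lambda>x. x \<in> B) (stake n \<omega>)) = (\<lambda>j. nth_in B d0 j \<omega>) ` {..<count_in B n \<omega>}"
proof -
  have gen: "set xs = (\<lambda>j. xs ! j) ` {..<length xs}" for xs :: "'a list"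
    by (auto simp: set_conv_nth)
  have "set (filter (\<lambda>x. x \<in> B) (stake n \<omega>)) = (\<lambda>j. filter (\<lambda>x. x \<in> B) (stake n \<omega>) ! j) ` {..<count_in B n \<omega>}"
    unfolding count_in_def by (rule gen)
  also have "\<dots> = (\<lambda>j. nth_in B d0 j \<omega>) ` {..<count_in B n \<omega>}"
    by (intro image_cong refl) (simp add: nth_in_eq_nth_filter)
  finally show ?thesis .
qed

lemma set_filter_to_stream:
  "set (filter (\<lambda>x. x \<in> B) (stake n (to_stream g))) = g ` {..<n} \<inter> B"
  by (auto simp: in_set_conv_nth image_iff to_stream_def)

lemma count_in_to_stream:
  "real (count_in B n (to_stream g)) = (\<Sum>i<n. indicator B (g i))"
proof (induction n)
  case 0 then show ?case by (simp add: count_in_def)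
next
  case (Suc n) then show ?case by (simp add: count_in_def stake_Suc to_stream_def indicator_def)
qed

section \<open>Affine maps between the unit cube and a box\<close>

definition affine_box :: "real^'d \<Rightarrow> real^'d \<Rightarrow> real^'d \<Rightarrow> real^'d" where
  "affine_box u v y = (\<chi> i. u$i + (v$i - u$i) * y$i)"

definition affine_box_inv :: "real^'d \<Rightarrow> real^'d \<Rightarrow> real^'d \<Rightarrow> real^'d" where
  "affine_box_inv u v x = (\<chi> i. (x$i - u$i) * (1 / (v$i - u$i)))"

lemma Basis_vec_axis: "(Basis :: (real^'n) set) = range (\<lambda>i. axis i 1)"
  by (auto simp: Basis_vec_def)

lemma prod_Basis_vec: "(\<Prod>j\<in>(Basis::(real^'n) set). g j) = (\<Prod>i\<in>UNIV. g (axis i 1))"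
  by (simp add: Basis_vec_axis prod.reindex inj_on_def axis_eq_axis)

lemma affine_box_continuous: "continuous_on UNIV (affine_box u v)"
  unfolding affine_box_def by (intro continuous_intros)

lemma affine_box_measurable[measurable]: "affine_box u v \<in> borel_measurable borel"
  by (rule borel_measurable_continuous_onI[OF affine_box_continuous])

lemma affine_box_inv_continuous: "continuous_on UNIV (affine_box_inv u v)"
  unfolding affine_box_inv_def by (intro continuous_intros)

lemma affine_box_inv_measurable[measurable]: "affine_box_inv u v \<in> borel_measurable borel"
  by (rule borel_measurable_continuous_onI[OF affine_box_inv_continuous])

lemma affine_box_inv_affine_box: "\<forall>i. u$i < v$i \<Longrightarrow> affine_box_inv u v (affine_box u v x) = x"
proof -
  assume uv: "\<forall>i. u$i < v$i"
  have "v$i - u$i \<noteq> 0" for i using uv[rule_format, of i] by simp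
  then show ?thesis by (simp add: affine_box_inv_def affine_box_def vec_eq_iff)
qed

lemma affine_box_affine_box_inv: "\<forall>i. u$i < v$i \<Longrightarrow> affine_box u v (affine_box_inv u v x) = x"
proof -
  assume uv: "\<forall>i. u$i < v$i"
  have "v$i - u$i \<noteq> 0" for i using uv[rule_format, of i] by simp
  then show ?thesis by (simp add: affine_box_inv_def affine_box_def vec_eq_iff)
qed

lemma leqq_affine_box: "\<forall>i. u$i < v$i \<Longrightarrow> leqq x y \<Longrightarrow> leqq (affine_box u v x) (affine_box u v y)"
  unfolding leqq_def affine_box_def by (auto intro!: mult_left_mono simp: less_imp_le)

lemma emeasure_lborel_affine_box:
  fixes u v :: "real^'d"
  assumes uv: "\<forall>i. u$i < v$i" and A: "A \<in> sets borel"
  shows "emeasure lborel A = ennreal (\<Prod>i\<in>UNIV. v$i - u$i) * emeasure lborel (affine_box u v -` A)"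
proof -
  let ?c = "\<lambda>j. (v - u) \<bullet> j"
  have c: "\<And>j. j \<in> Basis \<Longrightarrow> ?c j \<noteq> 0" using uv
    by (auto simp: Basis_vec_axis inner_axis) (metis less_irrefl)
  have T: "(\<lambda>x. u + (\<Sum>j\<in>Basis. (?c j * (x \<bullet> j)) *\<^sub>R j)) = affine_box u v"
  proof (rule ext)
    fix x :: "real^'d"
    define w where "w = (\<chi> i. (v$i - u$i) * x$i)"
    have "(\<Sum>j\<in>Basis. (?c j * (x \<bullet> j)) *\<^sub>R j) = (\<Sum>j\<in>Basis. (w \<bullet> j) *\<^sub>R j)"
      by (intro sum.cong refl) (auto simp: Basis_vec_axis inner_axis w_def)
    also have "\<dots> = w" by (rule euclidean_representation)
    finally show "u + (\<Sum>j\<in>Basis. (?c j * (x \<bullet> j)) *\<^sub>R j) = affine_box u v x"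
      by (simp add: w_def affine_box_def vec_eq_iff)
  qed
  have K: "(\<Prod>j\<in>Basis. \<bar>?c j\<bar>) = (\<Prod>i\<in>UNIV. v$i - u$i)"
    using uv by (simp add: prod_Basis_vec inner_axis less_imp_le)
  have eq: "lborel = density (distr lborel borel (affine_box u v)) (\<lambda>_. ennreal (\<Prod>i\<in>UNIV. v$i - u$i))"
    using lborel_affine_euclidean[where c="\<lambda>j. (v - u) \<bullet> j" and t=u, OF c] unfolding T K .
  have "emeasure lborel A = emeasure (density (distr lborel borel (affine_box u v)) (\<lambda>_. ennreal (\<Prod>i\<in>UNIV. v$i - u$i))) A"
    using arg_cong[where f="\<lambda>M. emeasure M A", OF eq] .
  also have "\<dots> = (\<integral>\<^sup>+x. ennreal (\<Prod>i\<in>UNIV. v$i - u$i) * indicator A x \<partial>distr lborel borel (affine_box u v))"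
    using A by (subst emeasure_density) (auto simp: mult.commute)
  also have "\<dots> = ennreal (\<Prod>i\<in>UNIV. v$i - u$i) * emeasure (distr lborel borel (affine_box u v)) A"
    using A by (intro nn_integral_cmult_indicator) simp
  also have "emeasure (distr lborel borel (affine_box u v)) A = emeasure lborel (affine_box u v -` A)"
    using A by (subst emeasure_distr) auto
  finally show ?thesis .
qed

lemma emeasure_affine_box_inv_vimage:
  fixes u v :: "real^'d"
  assumes uv: "\<forall>i. u$i < v$i" and Y: "Y \<in> sets borel"
  shows "emeasure lborel (affine_box_inv u v -` Y \<inter> box u v) = ennreal (\<Prod>i\<in>UNIV. v$i - u$i) * emeasure lborel (Y \<inter> box 0 1)"
proof -
  have A: "affine_box_inv u v -` Y \<inter> box u v \<in> sets borel"
  proof -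
    have "affine_box_inv u v -` Y \<inter> space borel \<in> sets borel" using measurable_sets[OF affine_box_inv_measurable Y] .
    then show ?thesis by auto
  qed
  have "affine_box u v -` (affine_box_inv u v -` Y \<inter> box u v) = Y \<inter> box 0 1"
  proof (intro set_eqI)
    fix x :: "real^'d"
    have comp: "(u$i < u$i + (v$i-u$i)*x$i \<and> u$i + (v$i-u$i)*x$i < v$i) \<longleftrightarrow> (0 < x$i \<and> x$i < 1)" for i
    proof -
      have c: "0 < v$i-u$i" using uv by simp
      have 1: "u$i < u$i + (v$i-u$i)*x$i \<longleftrightarrow> 0 < x$i" using c by (simp add: zero_less_mult_iff)
      have "u$i + (v$i-u$i)*x$i < v$i \<longleftrightarrow> (v$i-u$i)*x$i < (v$i-u$i)" by linarith
      also have "\<dots> \<longleftrightarrow> x$i < 1" using mult_less_cancel_left_pos[OF c, of "x$i" 1] by simp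
      finally show ?thesis using 1 by blast
    qed
    have "affine_box u v x \<in> box u v \<longleftrightarrow> x \<in> box 0 1"
      unfolding mem_box_cart affine_box_def using comp by simp
    then show "x \<in> affine_box u v -` (affine_box_inv u v -` Y \<inter> box u v) \<longleftrightarrow> x \<in> Y \<inter> box 0 1"
      using affine_box_inv_affine_box[OF uv] by auto
  qed
  then show ?thesis using emeasure_lborel_affine_box[OF uv A] by simp
qed

lemma emeasure_lborel_box_cart:
  fixes u v :: "real^'d"
  assumes uv: "\<forall>i. u$i < v$i"
  shows "emeasure lborel (box u v) = ennreal (\<Prod>i\<in>UNIV. v$i - u$i)"
proof -
  have "\<forall>b\<in>Basis. u \<bullet> b \<le> v \<bullet> b" using uv by (auto simp: Basis_vec_axis inner_axis less_imp_le)
  then show ?thesis using uv by (simp add: emeasure_lborel_box_eq prod_Basis_vec inner_axis less_imp_le)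
qed

lemma emeasure_lborel_cbox_01: "emeasure lborel (cbox 0 (1::real^'d)) = 1"
proof -
  have "\<forall>b\<in>(Basis::(real^'d) set). (0::real^'d) \<bullet> b \<le> 1 \<bullet> b" by (auto simp: Basis_vec_axis inner_axis)
  then show ?thesis by (simp add: emeasure_lborel_cbox_eq prod_Basis_vec inner_axis)
qed

lemma measure_unif_cube:
  assumes Y: "Y \<in> sets borel"
  shows "measure (unif_cube :: (real^'d) measure) Y = measure lborel (Y \<inter> box 0 1)"
proof -
  have one: "\<forall>i. (0::real^'d)$i < (1::real^'d)$i" by simp
  have "\<forall>b\<in>(Basis::(real^'d) set). (0::real^'d) \<bullet> b \<le> 1 \<bullet> b" by (auto simp: Basis_vec_axis inner_axis)
  then have cb: "emeasure lborel (cbox 0 (1::real^'d)) = 1"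
    by (simp add: emeasure_lborel_cbox_eq prod_Basis_vec inner_axis)
  have b: "emeasure lborel (box 0 (1::real^'d)) = 1"
    using emeasure_lborel_box_cart[OF one] by simp
  have null: "cbox 0 (1::real^'d) - box 0 1 \<in> null_sets lborel"
  proof -
    have "emeasure lborel (cbox 0 (1::real^'d) - box 0 1) = emeasure lborel (cbox 0 (1::real^'d)) - emeasure lborel (box 0 (1::real^'d))"
      by (rule emeasure_Diff) (auto simp: box_subset_cbox b)
    then show ?thesis using cb b by (auto simp: null_sets_def)
  qed
  have "Y \<inter> cbox 0 1 = (Y \<inter> box 0 1) \<union> (Y \<inter> (cbox 0 1 - box 0 1))" using box_subset_cbox by blast
  moreover have "Y \<inter> (cbox 0 1 - box 0 (1::real^'d)) \<in> null_sets lborel"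
    by (rule null_sets_subset[OF null]) (use Y in auto)
  ultimately have e: "emeasure lborel (Y \<inter> cbox 0 1) = emeasure lborel (Y \<inter> box 0 (1::real^'d))"
    using Y by (simp add: emeasure_Un_null_set)
  have "emeasure (unif_cube :: (real^'d) measure) Y = emeasure lborel (Y \<inter> box 0 1)"
    unfolding unif_cube_def using Y e by (simp add: emeasure_uniform_measure cb Int_commute divide_ennreal_def)
  then show ?thesis by (simp add: measure_def)
qed

section \<open>Longest chains of a sample inside a box\<close>

lemma AE_eventually_sum_gt:
  fixes Y :: "nat \<Rightarrow> 'a \<Rightarrow> real"
  assumes M: "prob_space M" and indY: "prob_space.indep_vars M (\<lambda>_. borel) Y UNIV"
    and dY: "\<And>i. distr M borel (Y i) = distr M borel (Y 0)"
    and Y01: "AE x in M. Y 0 x \<in> {0..1}" and EY: "prob_space.expectation M (Y 0) = q" and eps: "\<epsilon> > 0"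
  shows "AE \<omega> in M. eventually (\<lambda>n. (q - \<epsilon>) * real n < (\<Sum>i<n. Y i \<omega>)) sequentially"
proof -
  interpret prob_space M by fact
  have Ym[measurable]: "Y i \<in> borel_measurable M" for i using indY unfolding indep_vars_def by blast
  define A where "A n = {\<omega>\<in>space M. (\<Sum>i\<in>{..<Suc n}. Y i \<omega>) / real (card {..<Suc n}) \<le> q - \<epsilon>}" for n
  have Am: "A n \<in> sets M" for n unfolding A_def by measurable
  have Ab: "measure M (A n) \<le> exp (-2 * \<epsilon>\<^sup>2) ^ Suc n" for n
  proof -
    interpret H: Hoeffding_ineq_iid M "{..<Suc n}" Y "Y 0" 0 1 "expectation (Y 0)"
    proof unfold_locales
      show "indep_vars (\<lambda>_. borel) Y {..<Suc n}" using indep_vars_subset[OF indY] by simp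
      show "AE x in M. Y 0 x \<in> {0..1}" by (fact Y01)
    qed (use dY in auto)
    have "measure M (A n) \<le> exp (- 2 * real (card {..<Suc n}) * \<epsilon>\<^sup>2 / (1 - 0)\<^sup>2)"
    proof -
      have ne: "{..<Suc n} \<noteq> {}" by blast
      show ?thesis using H.Hoeffding_ineq_le'[OF less_imp_le[OF eps] zero_less_one ne, unfolded EY] unfolding A_def by simp
    qed
    also have "\<dots> = exp (-2 * \<epsilon>\<^sup>2) ^ Suc n"
      by (subst exp_of_nat_mult[symmetric]) (simp add: algebra_simps)
    finally show ?thesis .
  qed
  have r: "norm (exp (-2 * \<epsilon>\<^sup>2)) < 1" using eps by simp
  have "summable (\<lambda>n. exp (-2 * \<epsilon>\<^sup>2) ^ Suc n)"
    using summable_mult[OF summable_geometric[OF r], of "exp (-2 * \<epsilon>\<^sup>2)"] by simp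
  then have summ: "summable (\<lambda>n. measure M (A n))"
    by (rule summable_comparison_test'[where N=0]) (use Ab in simp)
  have "AE \<omega> in M. eventually (\<lambda>n. \<omega> \<in> space M - A n) sequentially"
    by (rule borel_cantelli_AE1[OF Am _ summ]) (simp add: emeasure_eq_measure)
  then show ?thesis
  proof (rule AE_mp, intro AE_I2 impI)
    fix \<omega> assume \<omega>: "\<omega> \<in> space M" and ev: "eventually (\<lambda>n. \<omega> \<in> space M - A n) sequentially"
    have "eventually (\<lambda>n. (q - \<epsilon>) * real (Suc n) < (\<Sum>i<Suc n. Y i \<omega>)) sequentially"
      using ev
    proof eventually_elim
      case (elim n)
      then have "\<not> (\<Sum>i\<in>{..<Suc n}. Y i \<omega>) / real (Suc n) \<le> q - \<epsilon>" using \<omega> unfolding A_def by simp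
      then have "(\<Sum>i\<in>{..<Suc n}. Y i \<omega>) / real (Suc n) > q - \<epsilon>" by simp
      then show ?case by (simp add: field_simps)
    qed
    then show "eventually (\<lambda>n. (q - \<epsilon>) * real n < (\<Sum>i<n. Y i \<omega>)) sequentially"
      by (rule eventually_sequentially_Suc[THEN iffD1])
  qed
qed

lemma AE_eventually_frequency_gt:
  fixes X :: "nat \<Rightarrow> 'a \<Rightarrow> 'b::topological_space" and B :: "'b set"
  assumes M: "prob_space M" and ind: "prob_space.indep_vars M (\<lambda>_. borel) X UNIV"
    and dX: "\<And>i. distr M borel (X i) = distr M borel (X 0)"
    and B: "B \<in> sets borel"
    and q: "q = measure M (X 0 -` B \<inter> space M)" and eps: "\<epsilon> > 0"
  shows "AE \<omega> in M. eventually (\<lambda>n. (\<Sum>i<n. indicator B (X i \<omega>)) > (q - \<epsilon>) * real n) sequentially"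
proof -
  interpret prob_space M by fact
  define Y where "Y = (\<lambda>i \<omega>. indicator B (X i \<omega>) :: real)"
  have Xm: "X i \<in> borel_measurable M" for i using ind unfolding indep_vars_def by blast
  have indY: "indep_vars (\<lambda>_. borel) Y UNIV"
    unfolding Y_def by (rule indep_vars_compose2[OF ind]) (use B in measurable)
  have dY: "distr M borel (Y i) = distr M borel (Y 0)" for i
  proof -
    have ib: "(indicator B :: 'b \<Rightarrow> real) \<in> borel_measurable borel" using B by simp
    have "distr M borel (Y i) = distr (distr M borel (X i)) borel (indicator B)"
      unfolding Y_def distr_distr[OF ib Xm] by (simp add: comp_def)
    also have "\<dots> = distr (distr M borel (X 0)) borel (indicator B)" by (subst dX[of i]) (rule refl)
    also have "\<dots> = distr M borel (Y 0)"
      unfolding Y_def distr_distr[OF ib Xm] by (simp add: comp_def)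
    finally show ?thesis .
  qed
  have "expectation (Y 0) = q"
  proof -
    have "expectation (Y 0) = expectation (indicator (X 0 -` B \<inter> space M))"
      by (intro Bochner_Integration.integral_cong) (auto simp: Y_def indicator_def)
    also have "\<dots> = q" by (simp add: q Bochner_Integration.integral_indicator Int_absorb2)
    finally show ?thesis .
  qed
  moreover have "AE x in M. Y 0 x \<in> {0..1}" by (simp add: Y_def indicator_def)
  ultimately show ?thesis
    using AE_eventually_sum_gt[OF M indY dY _ _ eps] unfolding Y_def by simp
qed

lemma distr_to_stream_iid:
  fixes X :: "nat \<Rightarrow> 'a \<Rightarrow> real^'d" and h :: "real^'d \<Rightarrow> ennreal"
  assumes M: "prob_space M" and ind: "prob_space.indep_vars M (\<lambda>_. borel) X UNIV"
    and dis: "\<And>i. distributed M lborel (X i) h"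
  shows "distr M (stream_space (density lborel h)) (\<lambda>\<omega>. to_stream (\<lambda>i. X i \<omega>)) = stream_space (density lborel h)"
proof -
  interpret prob_space M by fact
  define \<mu> where "\<mu> = density lborel h"
  have Xm: "X i \<in> M \<rightarrow>\<^sub>M borel" for i
    using distributed_measurable[OF dis[of i]] by (simp add: measurable_lborel1 cong: measurable_cong_sets)
  have dX: "distr M borel (X i) = \<mu>" for i
  proof -
    have "distr M borel (X i) = distr M lborel (X i)" by (rule distr_cong) auto
    also have "\<dots> = \<mu>" unfolding \<mu>_def by (rule distributed_distr_eq_density[OF dis])
    finally show ?thesis .
  qed
  have "distr M (PiM UNIV (\<lambda>_. borel)) (\<lambda>x. \<lambda>i\<in>UNIV. X i x) = PiM UNIV (\<lambda>i. distr M borel (X i))"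
    using indep_vars_iff_distr_eq_PiM[where I=UNIV and M'="\<lambda>_. borel" and X=X] ind Xm by simp
  moreover have "(\<lambda>x. \<lambda>i\<in>UNIV. X i x) = (\<lambda>x i. X i x)" by (auto simp: restrict_def)
  ultimately have P0: "distr M (PiM UNIV (\<lambda>_. borel)) (\<lambda>x i. X i x) = PiM UNIV (\<lambda>_. \<mu>)"
    by (simp add: dX)
  have sP: "sets (PiM UNIV (\<lambda>_::nat. \<mu>)) = sets (PiM UNIV (\<lambda>_::nat. borel))"
    by (rule sets_PiM_cong) (auto simp: \<mu>_def)
  have Xv: "(\<lambda>x i. X i x) \<in> M \<rightarrow>\<^sub>M PiM UNIV (\<lambda>_. \<mu>)"
    unfolding measurable_cong_sets[OF refl sP] by (rule measurable_PiM_single') (auto intro: Xm measurable_space)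
  have P: "distr M (PiM UNIV (\<lambda>_. \<mu>)) (\<lambda>x i. X i x) = PiM UNIV (\<lambda>_. \<mu>)"
  proof -
    have "distr M (PiM UNIV (\<lambda>_. \<mu>)) (\<lambda>x i. X i x) = distr M (PiM UNIV (\<lambda>_. borel)) (\<lambda>x i. X i x)"
      by (rule distr_cong) (auto simp: sP)
    then show ?thesis using P0 by simp
  qed
  have "distr M (stream_space \<mu>) (\<lambda>\<omega>. to_stream (\<lambda>i. X i \<omega>)) = distr (distr M (PiM UNIV (\<lambda>_. \<mu>)) (\<lambda>x i. X i x)) (stream_space \<mu>) to_stream"
    by (subst distr_distr[OF measurable_to_stream Xv]) (simp add: comp_def)
  also have "\<dots> = stream_space \<mu>" unfolding P by (rule stream_space_eq_distr[symmetric])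
  finally show ?thesis unfolding \<mu>_def .
qed

lemma measure_density_box:
  fixes h :: "real^'d \<Rightarrow> real" and u v :: "real^'d"
  defines "\<mu> \<equiv> density lborel (\<lambda>x. ennreal (h x))"
  assumes prob: "prob_space \<mu>" and hm: "(\<lambda>x. ennreal (h x)) \<in> borel_measurable borel"
    and uv: "\<forall>i. u$i < v$i" and a: "a > 0" and hB: "\<And>x. x \<in> box u v \<Longrightarrow> h x = a"
  shows measure_density_box_eq: "measure \<mu> (box u v) = a * (\<Prod>i\<in>UNIV. v$i - u$i)"
    and measure_density_box_affine_inv:
      "Y \<in> sets borel \<Longrightarrow> measure \<mu> (affine_box_inv u v -` Y \<inter> box u v) / measure \<mu> (box u v) = measure unif_cube Y"
proof -
  interpret mu: prob_space \<mu> by fact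
  define vol where "vol = (\<Prod>i\<in>UNIV. v$i - u$i)"
  have vol: "vol > 0" unfolding vol_def using uv by (intro prod_pos) auto
  have muZ: "measure \<mu> Z = a * measure lborel Z" if Z: "Z \<subseteq> box u v" "Z \<in> sets borel" for Z
  proof -
    have "emeasure \<mu> Z = (\<integral>\<^sup>+x. ennreal (h x) * indicator Z x \<partial>lborel)"
      unfolding \<mu>_def using Z hm by (subst emeasure_density) auto
    also have "\<dots> = (\<integral>\<^sup>+x. ennreal a * indicator Z x \<partial>lborel)"
      by (intro nn_integral_cong) (use Z hB in \<open>auto simp: indicator_def\<close>)
    also have "\<dots> = ennreal a * emeasure lborel Z" using Z by (intro nn_integral_cmult_indicator) auto
    also have "emeasure lborel Z = ennreal (measure lborel Z)"
    proof (rule emeasure_eq_ennreal_measure)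
      have "emeasure lborel Z \<le> emeasure lborel (box u v)" using Z by (intro emeasure_mono) auto
      then show "emeasure lborel Z \<noteq> \<top>" using emeasure_lborel_box_cart[OF uv] by (auto simp: top_unique)
    qed
    finally have "ennreal (measure \<mu> Z) = ennreal (a * measure lborel Z)"
      using a by (simp add: mu.emeasure_eq_measure ennreal_mult)
    then show ?thesis using a by (subst (asm) ennreal_inj) auto
  qed
  show vol_box: "measure \<mu> (box u v) = a * (\<Prod>i\<in>UNIV. v$i - u$i)"
    using muZ[of "box u v"] emeasure_lborel_box_cart[OF uv] vol unfolding vol_def
    by (simp add: measure_def)
  assume Y: "Y \<in> sets borel"
  have Z: "affine_box_inv u v -` Y \<inter> box u v \<in> sets borel"
    using measurable_sets[OF affine_box_inv_measurable Y] by auto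
  have "emeasure lborel (Y \<inter> box 0 1) \<le> emeasure lborel (box 0 (1::real^'d))"
    by (rule emeasure_mono) auto
  then have fin: "emeasure lborel (Y \<inter> box 0 (1::real^'d)) \<noteq> \<top>"
    using emeasure_lborel_box_cart[of "0::real^'d" 1] by (auto simp: top_unique)
  have "measure lborel (affine_box_inv u v -` Y \<inter> box u v) = vol * measure lborel (Y \<inter> box 0 1)"
    using emeasure_affine_box_inv_vimage[OF uv Y] fin vol unfolding vol_def
    by (simp add: measure_def enn2real_mult)
  then have "measure \<mu> (affine_box_inv u v -` Y \<inter> box u v) = (a * vol) * measure lborel (Y \<inter> box 0 1)"
    using muZ[OF _ Z] by simp
  moreover have "a * vol \<noteq> 0" using a vol by simp
  ultimately show "measure \<mu> (affine_box_inv u v -` Y \<inter> box u v) / measure \<mu> (box u v) = measure unif_cube Y"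
    using vol_box measure_unif_cube[OF Y] unfolding vol_def by simp
qed

lemma AE_tendsto_lchain_hits:
  fixes X :: "nat \<Rightarrow> 'a \<Rightarrow> real^'d" and h :: "real^'d \<Rightarrow> ennreal" and G :: "real^'d \<Rightarrow> real^'d"
  defines "\<mu> \<equiv> density lborel h"
  assumes M: "prob_space M" and ind: "prob_space.indep_vars M (\<lambda>_. borel) X UNIV"
    and dis: "\<And>i. distributed M lborel (X i) h" and cd: "is_cd TYPE('d) c"
    and B: "B \<in> sets borel" and q: "measure \<mu> B > 0" and d0: "d0 \<notin> B"
    and G: "G \<in> borel_measurable borel"
    and law: "\<And>Y. Y \<in> sets borel \<Longrightarrow> measure \<mu> (G -` Y \<inter> B) / measure \<mu> B = measure unif_cube Y"
  shows "AE \<omega> in M. (\<lambda>n. real n powr (-1 / real CARD('d)) *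
           real (lchain ((\<lambda>j. G (nth_in B d0 j (to_stream (\<lambda>i. X i \<omega>)))) ` {..<n}))) \<longlonglongrightarrow> c"
proof -
  interpret prob_space M by fact
  define \<Phi> where "\<Phi> \<omega> j = G (nth_in B d0 j \<omega>)" for \<omega> j
  define conv where "conv \<omega>' \<longleftrightarrow> (\<lambda>n. real n powr (-1 / real CARD('d)) * real (lchain (\<omega>' ` {..<n}))) \<longlonglongrightarrow> c"
    for \<omega>' :: "nat \<Rightarrow> real^'d"
  have Xm: "X i \<in> M \<rightarrow>\<^sub>M \<mu>" for i
    using distributed_measurable[OF dis[of i]]
    by (simp add: \<mu>_def measurable_lborel1 cong: measurable_cong_sets)
  have mu: "prob_space \<mu>"
    unfolding \<mu>_def using prob_space_distr[OF distributed_measurable[OF dis[of 0]]]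
    by (simp add: distributed_distr_eq_density[OF dis])
  have sU: "sets (unif_cube :: (real^'d) measure) = sets borel" unfolding unif_cube_def by simp
  have nu: "prob_space (unif_cube :: (real^'d) measure)"
    unfolding unif_cube_def by (rule prob_space_uniform_measure) (simp_all add: emeasure_lborel_cbox_01)
  have Gm: "G \<in> \<mu> \<rightarrow>\<^sub>M unif_cube"
    using G by (simp add: \<mu>_def sU cong: measurable_cong_sets)
  have smu: "sets \<mu> = sets borel" "space \<mu> = UNIV" unfolding \<mu>_def by simp_all
  have Wm: "nth_in B d0 j \<in> stream_space \<mu> \<rightarrow>\<^sub>M \<mu>" for j
    using B smu by (intro measurable_nth_in) auto
  have Phim: "\<Phi> \<in> stream_space \<mu> \<rightarrow>\<^sub>M PiM UNIV (\<lambda>_. unif_cube)"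
    unfolding \<Phi>_def by (rule measurable_PiM_single') (auto intro: measurable_compose[OF Wm Gm] measurable_space)
  have distr_hits: "distr (stream_space \<mu>) (PiM UNIV (\<lambda>_. unif_cube)) \<Phi> = PiM UNIV (\<lambda>_. unif_cube)"
    unfolding \<Phi>_def
  proof (rule distr_nth_in_stream[OF mu _ _ _ d0 nu Gm])
    show "B \<in> sets \<mu>" "measure \<mu> B > 0" "d0 \<in> space \<mu>" using B q smu by simp_all
    show "measure \<mu> (G -` Y \<inter> B) / measure \<mu> B = measure unif_cube Y" if "Y \<in> sets unif_cube" for Y
      using that law sU by simp
  qed
  have "AE \<omega>' in PiM UNIV (\<lambda>_. unif_cube). conv \<omega>'"
    using cd unfolding is_cd_def conv_def by simp
  then have AE_stream: "AE \<omega> in stream_space \<mu>. conv (\<Phi> \<omega>)"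
    by (intro AE_distrD[OF Phim]) (simp only: distr_hits)
  have Xs: "(\<lambda>\<omega>. to_stream (\<lambda>i. X i \<omega>)) \<in> M \<rightarrow>\<^sub>M stream_space \<mu>"
    by (rule measurable_compose[OF measurable_PiM_single' measurable_to_stream])
       (auto intro: Xm measurable_space)
  have distr_sample: "distr M (stream_space \<mu>) (\<lambda>\<omega>. to_stream (\<lambda>i. X i \<omega>)) = stream_space \<mu>"
    unfolding \<mu>_def by (rule distr_to_stream_iid[OF M ind dis])
  have "AE \<omega> in M. conv (\<Phi> (to_stream (\<lambda>i. X i \<omega>)))"
    by (rule AE_distrD[OF Xs]) (simp only: distr_sample AE_stream)
  then show ?thesis unfolding conv_def \<Phi>_def .
qed

lemma lchain_hits_le_lchain_box:
  fixes g :: "nat \<Rightarrow> real^'d"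
  assumes uv: "\<forall>i. u$i < v$i"
  shows "lchain ((\<lambda>j. affine_box_inv u v (nth_in (box u v) d0 j (to_stream g))) `
            {..<count_in (box u v) n (to_stream g)}) \<le> lchain (g ` {..<n} \<inter> box u v)"
proof -
  let ?N = "count_in (box u v) n (to_stream g)"
  let ?H = "(\<lambda>j. affine_box_inv u v (nth_in (box u v) d0 j (to_stream g))) ` {..<?N}"
  have "g ` {..<n} \<inter> box u v = (\<lambda>j. nth_in (box u v) d0 j (to_stream g)) ` {..<?N}"
    using set_filter_to_stream[of "box u v" n g] set_filter_stake_eq_nth_in[of "box u v" n _ d0] by simp
  also have "\<dots> = affine_box u v ` ?H"
    unfolding image_image using affine_box_affine_box_inv[OF uv] by simp
  finally have eq: "g ` {..<n} \<inter> box u v = affine_box u v ` ?H" .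
  show ?thesis unfolding eq
    by (rule lchain_le_lchain_image)
       (auto intro: inj_on_inverseI[of _ "affine_box_inv u v"] affine_box_inv_affine_box[OF uv] leqq_affine_box[OF uv])
qed

lemma AE_liminf_lchain_box:
  fixes X :: "nat \<Rightarrow> 'a \<Rightarrow> real^'d" and h :: "real^'d \<Rightarrow> real"
  assumes M: "prob_space M" and ind: "prob_space.indep_vars M (\<lambda>_. borel) X UNIV"
    and dis: "\<And>i. distributed M lborel (X i) (\<lambda>x. ennreal (h x))"
    and cd: "is_cd TYPE('d) c"
    and uv: "\<forall>i. u$i < v$i" and a: "a > 0" and hB: "\<And>x. x \<in> box u v \<Longrightarrow> h x = a"
  shows "AE \<omega> in M. ereal (c * (a * (\<Prod>i\<in>UNIV. v$i - u$i)) powr (1 / real CARD('d))) \<le>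
           liminf (\<lambda>n. ereal (real n powr (-1 / real CARD('d)) * real (lchain ((\<lambda>i. X i \<omega>) ` {..<n} \<inter> box u v))))"
proof -
  interpret prob_space M by fact
  define \<mu> where "\<mu> = density lborel (\<lambda>x. ennreal (h x))"
  define q where "q = a * (\<Prod>i\<in>UNIV. v$i - u$i)"
  define d where "d = real CARD('d)"
  define hits where "hits \<omega> j = affine_box_inv u v (nth_in (box u v) u j (to_stream (\<lambda>i. X i \<omega>)))" for \<omega> j
  have q: "q > 0" unfolding q_def using a uv by (intro mult_pos_pos prod_pos) auto
  have Xm: "X i \<in> borel_measurable M" for i
    using distributed_measurable[OF dis[of i]] by (simp add: measurable_lborel1 cong: measurable_cong_sets)
  have dX: "distr M lborel (X i) = \<mu>" for i unfolding \<mu>_def by (rule distributed_distr_eq_density[OF dis])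
  have mu: "prob_space \<mu>" using prob_space_distr[OF distributed_measurable[OF dis[of 0]]] dX[of 0] by simp
  have hm: "(\<lambda>x. ennreal (h x)) \<in> borel_measurable borel"
    using distributed_borel_measurable[OF dis[of 0]] by (simp add: measurable_lborel1 cong: measurable_cong_sets)
  note density_box = measure_density_box[OF mu[unfolded \<mu>_def] hm uv a hB, folded \<mu>_def q_def]
  have u: "u \<notin> box u v" by (auto simp: mem_box_cart)
  have conv: "AE \<omega> in M. (\<lambda>m. real m powr (-1/d) * real (lchain (hits \<omega> ` {..<m}))) \<longlonglongrightarrow> c"
    using AE_tendsto_lchain_hits[OF M ind dis cd _ _ u affine_box_inv_measurable] density_box q
    unfolding hits_def d_def \<mu>_def by simp
  have "distr M borel (X i) = distr M borel (X 0)" for i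
  proof -
    have "distr M borel (X i) = distr M lborel (X i)" by (rule distr_cong) auto
    also have "\<dots> = distr M lborel (X 0)" using dX by simp
    also have "\<dots> = distr M borel (X 0)" by (rule distr_cong) auto
    finally show ?thesis .
  qed
  moreover have "q = measure M (X 0 -` box u v \<inter> space M)"
  proof -
    have "q = measure (distr M lborel (X 0)) (box u v)" using density_box(1) unfolding dX by simp
    also have "\<dots> = measure M (X 0 -` box u v \<inter> space M)"
      by (rule measure_distr) (use Xm in \<open>auto simp: measurable_lborel1 cong: measurable_cong_sets\<close>)
    finally show ?thesis .
  qed
  ultimately have freq: "AE \<omega> in M. \<forall>k::nat. eventually (\<lambda>n.
      (q - q / real (k+2)) * real n < (\<Sum>i<n. indicator (box u v) (X i \<omega>))) sequentially"
    using q by (intro AE_all_countable[THEN iffD2] allI AE_eventually_frequency_gt[OF M ind]) auto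
  show ?thesis using conv freq
  proof eventually_elim
    case (elim \<omega>)
    let ?s = "to_stream (\<lambda>i. X i \<omega>)"
    show ?case unfolding q_def[symmetric] d_def[symmetric]
    proof (rule liminf_rescaled_ge_of_counts[where Lf="\<lambda>m. real (lchain (hits \<omega> ` {..<m}))"
          and N="\<lambda>n. count_in (box u v) n ?s"])
      show "(\<lambda>m. real m powr (-1/d) * real (lchain (hits \<omega> ` {..<m}))) \<longlonglongrightarrow> c" by (fact elim(1))
      show "c > 0" "q > 0" "d > 0" using cd q unfolding is_cd_def d_def by auto
      show "eventually (\<lambda>n. (1 - 1 / real (k+2)) * q * real n < real (count_in (box u v) n ?s)) sequentially" for k
        using elim(2)[rule_format, of k] by (rule eventually_mono) (simp add: count_in_to_stream algebra_simps)
      show "real (lchain (hits \<omega> ` {..<count_in (box u v) n ?s})) \<le> real (lchain ((\<lambda>i. X i \<omega>) ` {..<n} \<inter> box u v))" for n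
        unfolding hits_def using lchain_hits_le_lchain_box[OF uv] by simp
    qed
  qed
qed

section \<open>Admissible curves\<close>

definition cderiv :: "(real \<Rightarrow> real^'d) \<Rightarrow> real \<Rightarrow> real^'d" where
  "cderiv \<gamma> t = vector_derivative \<gamma> (at t within {0..1})"

lemma admissible_has_vector_derivative:
  assumes "admissible \<gamma>" "t \<in> {0..1}"
  shows "(\<gamma> has_vector_derivative cderiv \<gamma> t) (at t within {0..1})"
  using assms unfolding admissible_def cderiv_def by (simp add: vector_derivative_works[symmetric])

lemma admissible_deriv_continuous: "admissible \<gamma> \<Longrightarrow> continuous_on {0..1} (cderiv \<gamma>)"
  unfolding admissible_def cderiv_def by auto

lemma admissible_deriv_nonneg: "admissible \<gamma> \<Longrightarrow> t \<in> {0..1} \<Longrightarrow> cderiv \<gamma> t $ i \<ge> 0"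
  unfolding admissible_def cderiv_def by auto

lemma admissible_continuous: "admissible \<gamma> \<Longrightarrow> continuous_on {0..1} \<gamma>"
  using admissible_has_vector_derivative unfolding continuous_on_eq_continuous_within
  by (metis has_vector_derivative_continuous)

lemma admissible_ftc:
  assumes "admissible \<gamma>" "0 \<le> s" "s \<le> t" "t \<le> 1"
  shows "(cderiv \<gamma> has_integral (\<gamma> t - \<gamma> s)) {s..t}"
proof (rule fundamental_theorem_of_calculus[OF assms(3)])
  fix x assume "x \<in> {s..t}"
  then have "x \<in> {0..1}" using assms by auto
  from admissible_has_vector_derivative[OF assms(1) this] show "(\<gamma> has_vector_derivative cderiv \<gamma> x) (at x within {s..t})"
    by (rule has_vector_derivative_within_subset) (use assms in auto)
qed

lemma admissible_ftc_component:
  assumes "admissible \<gamma>" "0 \<le> s" "s \<le> t" "t \<le> 1"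
  shows "((\<lambda>x. cderiv \<gamma> x $ i) has_integral (\<gamma> t $ i - \<gamma> s $ i)) {s..t}"
  using has_integral_linear[OF admissible_ftc[OF assms] bounded_linear_vec_nth[of i]] by (simp add: comp_def)

lemma admissible_mono:
  assumes "admissible \<gamma>" "0 \<le> s" "s \<le> t" "t \<le> 1"
  shows "\<gamma> s $ i \<le> \<gamma> t $ i"
proof -
  have "0 \<le> \<gamma> t $ i - \<gamma> s $ i"
    by (rule has_integral_nonneg[OF admissible_ftc_component[OF assms]]) (use assms admissible_deriv_nonneg[OF assms(1)] in auto)
  then show ?thesis by simp
qed

lemma admissible_deriv_component_zero:
  assumes "admissible \<gamma>" "0 \<le> s" "s < t" "t \<le> 1" "\<gamma> s $ i = \<gamma> t $ i" "x \<in> {s..t}"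
  shows "cderiv \<gamma> x $ i = 0"
proof -
  have c: "continuous_on {s..t} (\<lambda>x. cderiv \<gamma> x $ i)"
    by (rule continuous_on_component, rule continuous_on_subset[OF admissible_deriv_continuous[OF assms(1)]]) (use assms in auto)
  have h: "((\<lambda>x. cderiv \<gamma> x $ i) has_integral 0) {s..t}"
    using admissible_ftc_component[OF assms(1,2) less_imp_le[OF assms(3)] assms(4), of i] assms(5) by simp
  show ?thesis
    by (rule has_integral_0_cbox_imp_0[of s t "\<lambda>x. cderiv \<gamma> x $ i"]) (use c h assms admissible_deriv_nonneg[OF assms(1)] in auto)
qed

lemma admissible_diagonal: "admissible (\<lambda>t::real. t *\<^sub>R (1::real^'d))"
proof -
  have hd: "((\<lambda>t::real. t *\<^sub>R (1::real^'d)) has_vector_derivative 1) (at t within S)" for t S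
    unfolding has_vector_derivative_def
    by (rule bounded_linear_imp_has_derivative) (rule bounded_linear_scaleR_left)
  have vd: "vector_derivative (\<lambda>t::real. t *\<^sub>R (1::real^'d)) (at t within {0..1}) = 1" if "t \<in> {0..1}" for t
    by (rule vector_derivative_within_closed_interval[OF _ that hd]) simp
  have h1: "\<forall>t\<in>{0..1}. (\<lambda>t. t *\<^sub>R (1::real^'d)) differentiable at t within {0..1}"
    using differentiableI[OF hd[unfolded has_vector_derivative_def]] by blast
  have h2: "continuous_on {0..1} (\<lambda>t. vector_derivative (\<lambda>t. t *\<^sub>R (1::real^'d)) (at t within {0..1}))"
    by (rule continuous_on_eq[OF continuous_on_const]) (simp add: vd)
  have h3: "\<forall>t\<in>{0..1}. (\<forall>i. 0 \<le> vector_derivative (\<lambda>t. t *\<^sub>R (1::real^'d)) (at t within {0..1}) $ i) \<and>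
          vector_derivative (\<lambda>t. t *\<^sub>R (1::real^'d)) (at t within {0..1}) \<noteq> 0"
    using vd by simp
  show ?thesis unfolding admissible_def using h1 h2 h3 by blast
qed

lemma closure_bound:
  fixes g :: "real \<Rightarrow> real"
  assumes g: "continuous_on {0..1} g" and pr: "0 \<le> p" "p < r" "r \<le> 1"
  shows closure_bound_ge: "(\<forall>t\<in>{p<..<r}. c \<le> g t) \<Longrightarrow> c \<le> g p \<and> c \<le> g r"
    and closure_bound_le: "(\<forall>t\<in>{p<..<r}. g t \<le> c) \<Longrightarrow> g p \<le> c \<and> g r \<le> c"
proof -
  have gc: "continuous_on {p..r} g" by (rule continuous_on_subset[OF g]) (use pr in auto)
  have cl1: "closed {x\<in>{p..r}. c \<le> g x}"
    by (rule continuous_on_closed_Collect_le) (auto intro: gc continuous_on_const)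
  have cl2: "closed {x\<in>{p..r}. g x \<le> c}"
    by (rule continuous_on_closed_Collect_le) (auto intro: gc continuous_on_const)
  have pr': "p \<in> closure {p<..<r}" "r \<in> closure {p<..<r}" using pr by auto
  show "(\<forall>t\<in>{p<..<r}. c \<le> g t) \<Longrightarrow> c \<le> g p \<and> c \<le> g r"
  proof -
    assume h: "\<forall>t\<in>{p<..<r}. c \<le> g t"
    have "{p<..<r} \<subseteq> {x\<in>{p..r}. c \<le> g x}" using h by auto
    then have "closure {p<..<r} \<subseteq> {x\<in>{p..r}. c \<le> g x}" using cl1 by (rule closure_minimal)
    then show ?thesis using pr' by auto
  qed
  show "(\<forall>t\<in>{p<..<r}. g t \<le> c) \<Longrightarrow> g p \<le> c \<and> g r \<le> c"
  proof -
    assume h: "\<forall>t\<in>{p<..<r}. g t \<le> c"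
    have "{p<..<r} \<subseteq> {x\<in>{p..r}. g x \<le> c}" using h by auto
    then have "closure {p<..<r} \<subseteq> {x\<in>{p..r}. g x \<le> c}" using cl2 by (rule closure_minimal)
    then show ?thesis using pr' by auto
  qed
qed

definition sublevel :: "(real \<Rightarrow> real^'d) \<Rightarrow> 'd \<Rightarrow> real \<Rightarrow> real set" where
  "sublevel \<gamma> i c = {t\<in>{0..1}. \<gamma> t $ i \<le> c}"

definition superlevel :: "(real \<Rightarrow> real^'d) \<Rightarrow> 'd \<Rightarrow> real \<Rightarrow> real set" where
  "superlevel \<gamma> i c = {t\<in>{0..1}. c \<le> \<gamma> t $ i}"

definition crossings :: "(real \<Rightarrow> real^'d) \<Rightarrow> nat \<Rightarrow> real set" where
  "crossings \<gamma> L = ({0,1} \<union> (\<Union>i. \<Union>k\<in>{0..L}. {Sup (sublevel \<gamma> i (real k / real L)), Inf (superlevel \<gamma> i (real k / real L))})) \<inter> {0..1}"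

lemma finite_crossings: "finite (crossings \<gamma> L)"
  unfolding crossings_def by auto

lemma crossings_01: "0 \<in> crossings \<gamma> L" "1 \<in> crossings \<gamma> L" "crossings \<gamma> L \<subseteq> {0..1}"
  unfolding crossings_def by auto

lemma same_side_le:
  assumes adm: "admissible \<gamma>" and pr: "0 \<le> p" "p < r" "r \<le> 1"
    and nb: "\<forall>t\<in>crossings \<gamma> L. \<not> (p < t \<and> t < r)" and k: "k \<in> {0..L}"
    and t: "t1 \<in> {p<..<r}" "t2 \<in> {p<..<r}" and h: "\<gamma> t1 $ i \<le> real k / real L"
  shows "\<gamma> t2 $ i \<le> real k / real L"
proof (cases "t2 \<le> t1")
  case True then show ?thesis using admissible_mono[OF adm, of t2 t1 i] t pr h by auto
next
  case False
  define c where "c = real k / real L"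
  define e where "e = Sup (sublevel \<gamma> i c)"
  have t1Lo: "t1 \<in> sublevel \<gamma> i c" using t pr h unfolding sublevel_def c_def by auto
  have bdd: "bdd_above (sublevel \<gamma> i c)" unfolding sublevel_def by (rule bdd_aboveI[of _ 1]) auto
  have e1: "t1 \<le> e" unfolding e_def by (rule cSup_upper[OF t1Lo bdd])
  have e2: "e \<le> 1" unfolding e_def by (rule cSup_least) (use t1Lo in \<open>auto simp: sublevel_def\<close>)
  have "e \<in> (\<Union>i'. \<Union>k'\<in>{0..L}. {Sup (sublevel \<gamma> i' (real k' / real L)), Inf (superlevel \<gamma> i' (real k' / real L))})"
    using k unfolding e_def c_def by blast
  then have eb: "e \<in> crossings \<gamma> L" unfolding crossings_def using e1 e2 t pr by auto
  have "\<not> e < r" using nb eb e1 t by force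
  then have "t2 < Sup (sublevel \<gamma> i c)" using t unfolding e_def by auto
  then obtain s where s: "s \<in> sublevel \<gamma> i c" "t2 < s" using less_cSup_iff[OF _ bdd] t1Lo by blast
  have "\<gamma> t2 $ i \<le> \<gamma> s $ i" using admissible_mono[OF adm, of t2 s i] s t pr unfolding sublevel_def by auto
  then show ?thesis using s unfolding sublevel_def c_def by auto
qed

lemma same_side_ge:
  assumes adm: "admissible \<gamma>" and pr: "0 \<le> p" "p < r" "r \<le> 1"
    and nb: "\<forall>t\<in>crossings \<gamma> L. \<not> (p < t \<and> t < r)" and k: "k \<in> {0..L}"
    and t: "t1 \<in> {p<..<r}" "t2 \<in> {p<..<r}" and h: "real k / real L \<le> \<gamma> t1 $ i"
  shows "real k / real L \<le> \<gamma> t2 $ i"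
proof (cases "t1 \<le> t2")
  case True then show ?thesis using admissible_mono[OF adm, of t1 t2 i] t pr h by auto
next
  case False
  define c where "c = real k / real L"
  define e where "e = Inf (superlevel \<gamma> i c)"
  have t1Hi: "t1 \<in> superlevel \<gamma> i c" using t pr h unfolding superlevel_def c_def by auto
  have bdd: "bdd_below (superlevel \<gamma> i c)" unfolding superlevel_def by (rule bdd_belowI[of _ 0]) auto
  have e1: "e \<le> t1" unfolding e_def by (rule cInf_lower[OF t1Hi bdd])
  have e2: "0 \<le> e" unfolding e_def by (rule cInf_greatest) (use t1Hi in \<open>auto simp: superlevel_def\<close>)
  have "e \<in> (\<Union>i'. \<Union>k'\<in>{0..L}. {Sup (sublevel \<gamma> i' (real k' / real L)), Inf (superlevel \<gamma> i' (real k' / real L))})"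
    using k unfolding e_def c_def by blast
  then have eb: "e \<in> crossings \<gamma> L" unfolding crossings_def using e1 e2 t pr by auto
  have "\<not> p < e" using nb eb e1 t by force
  then have "Inf (superlevel \<gamma> i c) < t2" using t unfolding e_def by auto
  then obtain s where s: "s \<in> superlevel \<gamma> i c" "s < t2" using cInf_less_iff[OF _ bdd] t1Hi by blast
  have "\<gamma> s $ i \<le> \<gamma> t2 $ i" using admissible_mono[OF adm, of s t2 i] s t pr unfolding superlevel_def by auto
  then show ?thesis using s unfolding superlevel_def c_def by auto
qed

section \<open>Bounding J by boxes along the curve\<close>

definition speed :: "(real \<Rightarrow> real^'d) \<Rightarrow> real \<Rightarrow> real" where
  "speed \<gamma> t = (\<Prod>i\<in>UNIV. cderiv \<gamma> t $ i) powr (1 / real CARD('d))"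

definition Jintegrand :: "(real^'d \<Rightarrow> real) \<Rightarrow> (real \<Rightarrow> real^'d) \<Rightarrow> real \<Rightarrow> real" where
  "Jintegrand f \<gamma> t = ext0 f (\<gamma> t) powr (1 / real CARD('d)) * speed \<gamma> t"

lemma Jfun_eq_integral: "Jfun f \<gamma> = integral {0..1} (Jintegrand f \<gamma>)"
  unfolding Jfun_def Jintegrand_def speed_def cderiv_def by simp

lemma geometric_mean_le_scaled_arithmetic_mean:
  fixes g \<Delta> :: "'i::finite \<Rightarrow> real"
  assumes \<Delta>: "\<And>i. \<Delta> i > 0" and g: "\<And>i. g i \<ge> 0"
  shows "(\<Prod>i\<in>UNIV. g i) powr (1 / real CARD('i))
    \<le> (\<Prod>i\<in>UNIV. \<Delta> i) powr (1 / real CARD('i)) * ((\<Sum>i\<in>UNIV. g i / \<Delta> i) / real CARD('i))"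
proof -
  define z where "z i = g i / \<Delta> i" for i
  have z: "z i \<ge> 0" for i unfolding z_def using \<Delta>[of i] g[of i] by simp
  have "g i = \<Delta> i * z i" for i unfolding z_def using \<Delta>[of i] by (simp add: less_imp_neq[symmetric])
  then have "(\<Prod>i\<in>UNIV. g i) powr (1 / real CARD('i))
      = (\<Prod>i\<in>UNIV. \<Delta> i) powr (1 / real CARD('i)) * (\<Prod>i\<in>UNIV. z i) powr (1 / real CARD('i))"
    using \<Delta> z by (simp add: prod.distrib powr_mult prod_nonneg less_imp_le)
  also have "(\<Prod>i\<in>UNIV. z i) powr (1 / real CARD('i)) \<le> (\<Sum>i\<in>UNIV. z i / real CARD('i))"
    using arith_geom_mean[of UNIV z] z by simp
  finally show ?thesis
    using \<Delta> by (simp add: mult_left_mono z_def sum_divide_distrib prod_nonneg less_imp_le)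
qed

lemma integral_le_box_volume:
  fixes \<gamma> :: "real \<Rightarrow> real^'d"
  assumes adm: "admissible \<gamma>" and pr: "0 \<le> p" "p < r" "r \<le> 1"
    and Dp: "\<forall>i. \<gamma> p $ i < \<gamma> r $ i" and c0: "c0 \<ge> 0"
    and Fi: "F integrable_on {p..r}" and Fe: "\<forall>t\<in>{p<..<r}. F t = c0 * speed \<gamma> t"
  shows "integral {p..r} F \<le> c0 * (\<Prod>i\<in>UNIV. \<gamma> r $ i - \<gamma> p $ i) powr (1 / real CARD('d))"
proof -
  define \<Delta> where "\<Delta> i = \<gamma> r $ i - \<gamma> p $ i" for i
  define d where "d = real CARD('d)"
  have Dpos: "\<Delta> i > 0" for i using Dp unfolding \<Delta>_def by simp
  have dpos: "d > 0" unfolding d_def by simp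
  define K where "K = c0 * (\<Prod>i\<in>UNIV. \<Delta> i) powr (1/d) / d"
  define Bf where "Bf t = K * (\<Sum>i\<in>UNIV. (1 / \<Delta> i) * cderiv \<gamma> t $ i)" for t
  have hB: "(Bf has_integral K * (\<Sum>i\<in>UNIV. (1 / \<Delta> i) * \<Delta> i)) {p..r}"
  proof -
    have hc: "((\<lambda>t. cderiv \<gamma> t $ i) has_integral \<Delta> i) {p..r}" for i
      unfolding \<Delta>_def by (rule admissible_ftc_component[OF adm pr(1) less_imp_le[OF pr(2)] pr(3)])
    show ?thesis unfolding Bf_def
      by (intro has_integral_mult_right has_integral_sum) (auto intro: hc)
  qed
  have sum1: "(\<Sum>i\<in>UNIV. (1 / \<Delta> i) * \<Delta> i) = d"
    using Dpos unfolding d_def by (simp add: less_imp_neq[symmetric])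
  have intB: "integral {p..r} Bf = c0 * (\<Prod>i\<in>UNIV. \<Delta> i) powr (1/d)"
    using hB unfolding sum1 K_def using dpos by (simp add: integral_unique)
  have pt: "F t \<le> Bf t" if t: "t \<in> {p<..<r}" for t
  proof -
    have "t \<in> {0..1}" using t pr by auto
    then have "speed \<gamma> t \<le> (\<Prod>i\<in>UNIV. \<Delta> i) powr (1/d) * ((\<Sum>i\<in>UNIV. cderiv \<gamma> t $ i / \<Delta> i) / d)"
      unfolding speed_def d_def
      by (intro geometric_mean_le_scaled_arithmetic_mean Dpos admissible_deriv_nonneg[OF adm])
    then have "c0 * speed \<gamma> t \<le> c0 * ((\<Prod>i\<in>UNIV. \<Delta> i) powr (1/d) * ((\<Sum>i\<in>UNIV. cderiv \<gamma> t $ i / \<Delta> i) / d))"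
      using c0 by (rule mult_left_mono)
    then show ?thesis using Fe t unfolding Bf_def K_def by simp
  qed
  have "integral {p..r} F = integral {p<..<r} F" by (rule integral_open_interval_real)
  also have "\<dots> \<le> integral {p<..<r} Bf"
  proof (rule integral_le)
    show "F integrable_on {p<..<r}" using Fi integrable_on_open_interval_real by blast
    have "Bf integrable_on {p..r}" using hB by (rule has_integral_integrable)
    then show "Bf integrable_on {p<..<r}" using integrable_on_open_interval_real by blast
  qed (use pt in auto)
  also have "\<dots> = integral {p..r} Bf" by (rule integral_open_interval_real[symmetric])
  finally show ?thesis unfolding intB \<Delta>_def d_def .
qed

lemma integral_zero_open:
  fixes p r :: real
  assumes "\<forall>t\<in>{p<..<r}. F t = (0::real)"
  shows "integral {p..r} F = 0"
proof -
  have "integral {p..r} F = integral {p<..<r} F" by (rule integral_open_interval_real)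
  also have "\<dots> = integral {p<..<r} (\<lambda>_. 0::real)" by (rule integral_cong) (use assms in auto)
  finally show ?thesis by simp
qed

definition grid_cell :: "nat \<Rightarrow> ('d \<Rightarrow> nat) \<Rightarrow> (real^'d) set" where
  "grid_cell L k = {y. \<forall>i. real (k i) / real L < y $ i \<and> y $ i < real (Suc (k i)) / real L}"

lemma grid_index:
  fixes x :: real
  assumes L: "L \<ge> 1" and x: "0 \<le> x" "x \<le> 1" and off_grid: "\<forall>k\<in>{0..L}. x \<noteq> real k / real L"
  defines "k \<equiv> nat \<lfloor>real L * x\<rfloor>"
  shows "real k / real L < x" "x < real (Suc k) / real L" "Suc k \<le> L"
proof -
  have Lpos: "real L > 0" using L by simp
  have fl: "real_of_int \<lfloor>real L * x\<rfloor> \<le> real L * x" "real L * x < real_of_int \<lfloor>real L * x\<rfloor> + 1"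
    by linarith+
  have kk: "real k = real_of_int \<lfloor>real L * x\<rfloor>" unfolding k_def using x Lpos by simp
  have "x \<noteq> real L / real L" using off_grid by auto
  then have "x < 1" using x Lpos by simp
  then have "real L * x < real L" using mult_strict_left_mono[OF _ Lpos, of x 1] by simp
  then show "Suc k \<le> L" using fl(1) kk by linarith
  have "x \<noteq> real k / real L" using off_grid \<open>Suc k \<le> L\<close> by simp
  moreover have "real k / real L \<le> x" using fl(1) kk Lpos by (simp add: divide_le_eq mult.commute)
  ultimately show "real k / real L < x" by simp
  have "real L * x < real (Suc k)" using fl(2) kk by linarith
  then show "x < real (Suc k) / real L" using Lpos by (simp add: less_divide_eq mult.commute)
qed

lemma grid_cell_subset_Qcube:
  assumes L: "L \<ge> 1" and k: "\<And>i. Suc (k i) \<le> L"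
  shows "grid_cell L k \<subseteq> Qcube L (\<lambda>i. Suc (k i))"
proof
  fix y assume y: "y \<in> grid_cell L k"
  have Lpos: "real L > 0" using L by simp
  have a1: "real (k i) < real L * y $ i" "real L * y $ i < real (Suc (k i))" for i
    using y Lpos unfolding grid_cell_def by (auto simp: divide_less_eq less_divide_eq mult.commute)
  have "y \<in> unit_cube" unfolding unit_cube_def
  proof (intro CollectI allI conjI)
    fix i
    have "0 < real L * y $ i" using a1(1)[of i] by linarith
    then show "0 \<le> y $ i" using Lpos by (simp add: zero_less_mult_iff)
    have "real L * y $ i < real L * 1" using a1(2)[of i] k[of i] by linarith
    then show "y $ i < 1" using mult_less_cancel_left_pos[OF Lpos] by blast
  qed
  then show "y \<in> Qcube L (\<lambda>i. Suc (k i))" unfolding Qcube_def using a1 by (auto simp: less_imp_le)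
qed

text \<open>Between consecutive crossings every coordinate of the curve stays on one side of every grid
  level.\<close>
lemma curve_between_crossings_cases:
  assumes adm: "admissible \<gamma>" and L: "L \<ge> 1"
    and pr: "0 \<le> p" "p < r" "r \<le> 1" and nb: "\<forall>t\<in>crossings \<gamma> L. \<not> (p < t \<and> t < r)"
  obtains (flat) i where "\<forall>t\<in>{p<..<r}. cderiv \<gamma> t $ i = 0"
    | (outside) "\<forall>t\<in>{p<..<r}. \<gamma> t \<notin> unit_cube"
    | (cell) k where "\<And>i. Suc (k i) \<le> L" "\<forall>t\<in>{p<..<r}. \<gamma> t \<in> grid_cell L k"
proof -
  define x where "x = \<gamma> ((p + r) / 2)"
  have m: "(p + r) / 2 \<in> {p<..<r}" using pr by auto
  have sle: "\<gamma> t $ i \<le> real k / real L \<longleftrightarrow> x $ i \<le> real k / real L"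
    if "k \<in> {0..L}" "t \<in> {p<..<r}" for t i k
    using same_side_le[OF adm pr nb that(1) m that(2)] same_side_le[OF adm pr nb that(1) that(2) m]
    unfolding x_def by blast
  have sge: "real k / real L \<le> \<gamma> t $ i \<longleftrightarrow> real k / real L \<le> x $ i"
    if "k \<in> {0..L}" "t \<in> {p<..<r}" for t i k
    using same_side_ge[OF adm pr nb that(1) m that(2)] same_side_ge[OF adm pr nb that(1) that(2) m]
    unfolding x_def by blast
  consider (on_grid) i k where "k \<in> {0..L}" "x $ i = real k / real L"
    | (out) i where "x $ i < 0 \<or> x $ i > 1"
    | (inside) "\<And>i. 0 \<le> x $ i \<and> x $ i \<le> 1 \<and> (\<forall>k\<in>{0..L}. x $ i \<noteq> real k / real L)"
    by (meson not_le)
  then show ?thesis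
  proof cases
    case (on_grid i k)
    have const: "\<gamma> t $ i = real k / real L" if "t \<in> {p<..<r}" for t
      using sle[OF on_grid(1) that, of i] sge[OF on_grid(1) that, of i] on_grid(2) by linarith
    have "\<forall>t\<in>{p<..<r}. cderiv \<gamma> t $ i = 0"
    proof
      fix t assume t: "t \<in> {p<..<r}"
      have s: "(p + t) / 2 \<in> {p<..<r}" "(t + r) / 2 \<in> {p<..<r}" "(p + t) / 2 < (t + r) / 2"
          "t \<in> {(p + t) / 2..(t + r) / 2}"
        using t by auto
      show "cderiv \<gamma> t $ i = 0"
        by (rule admissible_deriv_component_zero[OF adm _ s(3) _ _ s(4)]) (use s pr const in auto)
    qed
    then show ?thesis by (rule flat)
  next
    case (out i)
    have "\<gamma> t \<notin> unit_cube" if t: "t \<in> {p<..<r}" for t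
    proof
      assume "\<gamma> t \<in> unit_cube"
      then have "0 \<le> \<gamma> t $ i" "\<gamma> t $ i \<le> 1" unfolding unit_cube_def by (auto simp: less_imp_le)
      then show False using sge[of 0 t i] sle[of L t i] t out L by simp
    qed
    then show ?thesis using outside by blast
  next
    case inside
    define k where "k i = nat \<lfloor>real L * x $ i\<rfloor>" for i
    note idx = grid_index[OF L inside[THEN conjunct1] inside[THEN conjunct2, THEN conjunct1]
        inside[THEN conjunct2, THEN conjunct2], folded k_def]
    have "\<gamma> t \<in> grid_cell L k" if t: "t \<in> {p<..<r}" for t
      unfolding grid_cell_def
    proof (intro CollectI allI)
      fix i
      have "k i \<in> {0..L}" "Suc (k i) \<in> {0..L}" using idx(3)[of i] by auto
      then show "real (k i) / real L < \<gamma> t $ i \<and> \<gamma> t $ i < real (Suc (k i)) / real L"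
        using sle[of "k i" t i] sge[of "Suc (k i)" t i] idx(1,2)[of i] t by (auto simp: not_le)
    qed
    then show ?thesis using idx(3) by (intro cell[of k]) auto
  qed
qed

lemma box_subset_grid_cell:
  assumes adm: "admissible \<gamma>" and pr: "0 \<le> p" "p < r" "r \<le> 1"
    and cell: "\<forall>t\<in>{p<..<r}. \<gamma> t \<in> grid_cell L k"
  shows "box (\<gamma> p) (\<gamma> r) \<subseteq> grid_cell L k"
proof
  fix y assume y: "y \<in> box (\<gamma> p) (\<gamma> r)"
  show "y \<in> grid_cell L k" unfolding grid_cell_def
  proof (intro CollectI allI)
    fix i
    have cont: "continuous_on {0..1} (\<lambda>t. \<gamma> t $ i)"
      by (rule continuous_on_component[OF admissible_continuous[OF adm]])
    have "real (k i) / real L \<le> \<gamma> p $ i"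
      using closure_bound_ge[OF cont pr, of "real (k i) / real L"] cell unfolding grid_cell_def
      by (auto simp: less_imp_le)
    moreover have "\<gamma> r $ i \<le> real (Suc (k i)) / real L"
      using closure_bound_le[OF cont pr, of "real (Suc (k i)) / real L"] cell unfolding grid_cell_def
      by (auto simp: less_imp_le)
    moreover have "\<gamma> p $ i < y $ i" "y $ i < \<gamma> r $ i" using y by (simp_all add: mem_box_cart)
    ultimately show "real (k i) / real L < y $ i \<and> y $ i < real (Suc (k i)) / real L" by linarith
  qed
qed

lemma integral_between_crossings:
  fixes f :: "real^'d \<Rightarrow> real" and \<gamma> :: "real \<Rightarrow> real^'d"
  assumes adm: "admissible \<gamma>" and L: "L \<ge> 1" and pc: "piecewise_const L f"
    and fnn: "\<forall>x\<in>unit_cube. f x \<ge> 0"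
    and pr: "0 \<le> p" "p < r" "r \<le> 1" and nb: "\<forall>t\<in>crossings \<gamma> L. \<not> (p < t \<and> t < r)"
    and Fi: "Jintegrand f \<gamma> integrable_on {p..r}"
  shows "integral {p..r} (Jintegrand f \<gamma>) \<le> 0 \<or>
    (\<exists>a>0. (\<forall>i. \<gamma> p $ i < \<gamma> r $ i) \<and> (\<forall>x\<in>box (\<gamma> p) (\<gamma> r). ext0 f x = a) \<and>
       integral {p..r} (Jintegrand f \<gamma>) \<le> (a * (\<Prod>i\<in>UNIV. \<gamma> r $ i - \<gamma> p $ i)) powr (1 / real CARD('d)))"
proof -
  have zero: "integral {p..r} (Jintegrand f \<gamma>) \<le> 0" if "\<forall>t\<in>{p<..<r}. Jintegrand f \<gamma> t = 0"
    using integral_zero_open[OF that] by simp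
  have zero_flat: "integral {p..r} (Jintegrand f \<gamma>) \<le> 0" if "\<forall>t\<in>{p<..<r}. cderiv \<gamma> t $ i = 0" for i
    using that by (intro zero) (auto simp: Jintegrand_def speed_def prod_zero)
  show ?thesis
  proof (rule curve_between_crossings_cases[OF adm L pr nb])
    fix i assume "\<forall>t\<in>{p<..<r}. cderiv \<gamma> t $ i = 0"
    then show ?thesis using zero_flat by blast
  next
    assume "\<forall>t\<in>{p<..<r}. \<gamma> t \<notin> unit_cube"
    then show ?thesis using zero unfolding Jintegrand_def ext0_def by simp
  next
    fix k assume cell: "\<And>i. Suc (k i) \<le> L" "\<forall>t\<in>{p<..<r}. \<gamma> t \<in> grid_cell L k"
    have cellQ: "grid_cell L k \<subseteq> Qcube L (\<lambda>i. Suc (k i))"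
      by (rule grid_cell_subset_Qcube[OF L cell(1)])
    have "\<exists>a. \<forall>y\<in>Qcube L (\<lambda>i. Suc (k i)). f y = a"
      using pc cell(1) unfolding piecewise_const_def by simp
    then obtain a where a: "\<forall>y\<in>Qcube L (\<lambda>i. Suc (k i)). f y = a" by blast
    have QU: "Qcube L \<alpha> \<subseteq> unit_cube" for \<alpha> unfolding Qcube_def by auto
    have ext_cell: "ext0 f y = a" if "y \<in> grid_cell L k" for y
      using that cellQ QU a unfolding ext0_def by auto
    have "\<gamma> ((p + r) / 2) \<in> Qcube L (\<lambda>i. Suc (k i))"
      using cell(2) cellQ pr by auto
    then have "a \<ge> 0" using a fnn QU by force
    have Feq: "\<forall>t\<in>{p<..<r}. Jintegrand f \<gamma> t = a powr (1 / real CARD('d)) * speed \<gamma> t"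
      using cell(2) ext_cell unfolding Jintegrand_def by simp
    consider "a = 0" | i where "\<gamma> p $ i = \<gamma> r $ i" | "a > 0" "\<forall>i. \<gamma> p $ i < \<gamma> r $ i"
      using \<open>a \<ge> 0\<close> admissible_mono[OF adm pr(1) less_imp_le[OF pr(2)] pr(3)]
      by (metis order.order_iff_strict)
    then show ?thesis
    proof cases
      case 1
      then show ?thesis using zero Feq by simp
    next
      case (2 i)
      have "\<forall>t\<in>{p<..<r}. cderiv \<gamma> t $ i = 0"
        using admissible_deriv_component_zero[OF adm pr(1,2,3) 2] by auto
      then show ?thesis using zero_flat by blast
    next
      case 3
      have "integral {p..r} (Jintegrand f \<gamma>) \<le> a powr (1 / real CARD('d)) * (\<Prod>i\<in>UNIV. \<gamma> r $ i - \<gamma> p $ i) powr (1 / real CARD('d))"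
        by (rule integral_le_box_volume[OF adm pr 3(2) _ Fi Feq]) simp
      also have "\<dots> = (a * (\<Prod>i\<in>UNIV. \<gamma> r $ i - \<gamma> p $ i)) powr (1 / real CARD('d))"
        using 3 by (simp add: powr_mult prod_nonneg less_imp_le)
      finally show ?thesis
        using 3 box_subset_grid_cell[OF adm pr cell(2)] ext_cell by blast
    qed
  qed
qed

lemma integral_sorted_partition:
  fixes F :: "real \<Rightarrow> real"
  assumes "sorted xs" "xs \<noteq> []" "F integrable_on {xs!0..xs!(length xs - 1)}"
  shows "integral {xs!0..xs!(length xs - 1)} F = (\<Sum>j<length xs - 1. integral {xs!j..xs!(Suc j)} F)"
  using assms
proof (induction xs)
  case Nil then show ?case by simp
next
  case (Cons x xs)
  show ?case
  proof (cases "xs = []")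
    case True
    then show ?thesis by (simp add: integral_unique[OF has_integral_refl(2)])
  next
    case False
    have s: "sorted xs" using Cons.prems by simp
    have lx: "length xs \<ge> 1" using False by (cases xs) auto
    have xy: "x \<le> xs!0" using Cons.prems(1) False by (cases xs) auto
    have yl: "xs!0 \<le> xs!(length xs - 1)" using sorted_nth_mono[OF s, of 0 "length xs - 1"] lx by simp
    have last: "(x#xs)!(length (x#xs) - 1) = xs!(length xs - 1)" using lx by (cases "length xs") auto
    have Fi: "F integrable_on {x..xs!(length xs - 1)}" using Cons.prems(3) last by simp
    have Fi2: "F integrable_on {xs!0..xs!(length xs - 1)}"
      by (rule integrable_subinterval_real[OF Fi]) (use xy in auto)
    have "integral {x..xs!(length xs - 1)} F = integral {x..xs!0} F + integral {xs!0..xs!(length xs - 1)} F"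
      using Henstock_Kurzweil_Integration.integral_combine[OF xy yl Fi] by simp
    also have "integral {xs!0..xs!(length xs - 1)} F = (\<Sum>j<length xs - 1. integral {xs!j..xs!(Suc j)} F)"
      by (rule Cons.IH[OF s False Fi2])
    also have "integral {x..xs!0} F + (\<Sum>j<length xs - 1. integral {xs!j..xs!(Suc j)} F)
        = (\<Sum>j<length (x#xs) - 1. integral {(x#xs)!j..(x#xs)!(Suc j)} F)"
    proof -
      have "length (x#xs) - 1 = Suc (length xs - 1)" using lx by simp
      then show ?thesis by (simp only: sum.lessThan_Suc_shift) simp
    qed
    finally show ?thesis using last by simp
  qed
qed

lemma sorted_list_of_set_partition:
  fixes S :: "real set"
  assumes S: "finite S" "a \<in> S" "b \<in> S" "S \<subseteq> {a..b}"
  defines "ts \<equiv> sorted_list_of_set S"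
  shows sorted_list_of_set_partition_ends: "ts \<noteq> []" "ts ! 0 = a" "ts ! (length ts - 1) = b"
    and sorted_list_of_set_partition_sorted: "sorted ts"
    and sorted_list_of_set_partition_mem: "\<And>j. j < length ts \<Longrightarrow> ts ! j \<in> S"
    and sorted_list_of_set_partition_less: "\<And>j. Suc j < length ts \<Longrightarrow> ts ! j < ts ! Suc j"
    and sorted_list_of_set_partition_gap:
      "\<And>j t. Suc j < length ts \<Longrightarrow> t \<in> S \<Longrightarrow> \<not> (ts ! j < t \<and> t < ts ! Suc j)"
proof -
  have set: "set ts = S" and ssrt: "sorted_wrt (<) ts"
    unfolding ts_def using S(1) by (simp_all add: strict_sorted_list_of_set)
  show srt: "sorted ts" unfolding ts_def by simp
  show mem: "ts ! j \<in> S" if "j < length ts" for j using set that by auto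
  show ne: "ts \<noteq> []" using set S(2) by auto
  have idx: "\<exists>k<length ts. ts ! k = x" if "x \<in> S" for x using set that by (metis in_set_conv_nth)
  show "ts ! 0 = a"
  proof -
    obtain k where "k < length ts" "ts ! k = a" using idx[OF S(2)] by blast
    then show ?thesis using sorted_nth_mono[OF srt, of 0 k] mem[of 0] ne S(4) by fastforce
  qed
  show "ts ! (length ts - 1) = b"
  proof -
    obtain k where "k < length ts" "ts ! k = b" using idx[OF S(3)] by blast
    then show ?thesis using sorted_nth_mono[OF srt, of k "length ts - 1"] mem[of "length ts - 1"] ne S(4)
      by fastforce
  qed
  show "ts ! j < ts ! Suc j" if "Suc j < length ts" for j
    using sorted_wrt_nth_less[OF ssrt, of j "Suc j"] that by simp
  show "\<not> (ts ! j < t \<and> t < ts ! Suc j)" if j: "Suc j < length ts" and t: "t \<in> S" for j t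
  proof -
    obtain k where k: "k < length ts" "t = ts ! k" using idx[OF t] by metis
    show ?thesis
    proof (cases "k \<le> j")
      case True
      then show ?thesis using sorted_nth_mono[OF srt True] j k by simp
    next
      case False
      then show ?thesis using sorted_nth_mono[OF srt, of "Suc j" k] k by simp
    qed
  qed
qed

lemma Jfun_le_sum_boxes:
  fixes f :: "real^'d \<Rightarrow> real" and \<gamma> :: "real \<Rightarrow> real^'d"
  assumes adm: "admissible \<gamma>" and L: "L \<ge> 1" and pc: "piecewise_const L f"
    and fnn: "\<forall>x\<in>unit_cube. f x \<ge> 0"
  shows "\<exists>(u::nat \<Rightarrow> real^'d) v (a::nat \<Rightarrow> real) G. finite G \<and>
     (\<forall>j\<in>G. (\<forall>i. u j $ i < v j $ i) \<and> a j > 0 \<and> (\<forall>x\<in>box (u j) (v j). ext0 f x = a j)) \<and>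
     (\<forall>j\<in>G. \<forall>j'\<in>G. j < j' \<longrightarrow> (\<forall>i. v j $ i \<le> u j' $ i)) \<and>
     Jfun f \<gamma> \<le> (\<Sum>j\<in>G. (a j * (\<Prod>i\<in>UNIV. v j $ i - u j $ i)) powr (1 / real CARD('d)))"
proof -
  define ts where "ts = sorted_list_of_set (crossings \<gamma> L)"
  define K where "K = length ts - 1"
  note part = sorted_list_of_set_partition[OF finite_crossings[of \<gamma> L] crossings_01[of \<gamma> L], folded ts_def]
  have in01: "ts ! j \<in> {0..1}" if "j \<le> K" for j
  proof -
    have "j < length ts" using that part(1) unfolding K_def by (cases "length ts") auto
    then show ?thesis using part(5)[of j] crossings_01(3)[of \<gamma> L] by auto
  qed
  have step: "0 \<le> ts ! j" "ts ! j < ts ! Suc j" "ts ! Suc j \<le> 1" if "j < K" for j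
    using in01[of j] in01[of "Suc j"] part(6)[of j] that unfolding K_def by auto
  define u where "u j = \<gamma> (ts ! j)" for j
  define v where "v j = \<gamma> (ts ! (Suc j))" for j
  define I where "I j = integral {ts ! j..ts ! (Suc j)} (Jintegrand f \<gamma>)" for j
  define P where "P j a \<longleftrightarrow> a > 0 \<and> (\<forall>i. u j $ i < v j $ i) \<and> (\<forall>x\<in>box (u j) (v j). ext0 f x = a) \<and>
       I j \<le> (a * (\<Prod>i\<in>UNIV. v j $ i - u j $ i)) powr (1 / real CARD('d))" for j a
  define G where "G = {j. j < K \<and> (\<exists>a. P j a)}"
  define a where "a j = (SOME a. P j a)" for j
  have aP: "P j (a j)" if "j \<in> G" for j using that unfolding G_def a_def by (auto intro: someI_ex)
  have ord: "\<forall>j\<in>G. \<forall>j'\<in>G. j < j' \<longrightarrow> (\<forall>i. v j $ i \<le> u j' $ i)"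
  proof (intro ballI impI allI)
    fix j j' i assume jj: "j \<in> G" "j' \<in> G" "j < j'"
    have jK: "Suc j \<le> K" "j' \<le> K" using jj unfolding G_def by auto
    have "ts ! (Suc j) \<le> ts ! j'"
      using sorted_nth_mono[OF part(4), of "Suc j" j'] jj(3) jK unfolding K_def by simp
    then show "v j $ i \<le> u j' $ i" unfolding u_def v_def using in01 jK by (intro admissible_mono[OF adm]) auto
  qed
  have J: "Jfun f \<gamma> \<le> (\<Sum>j\<in>G. (a j * (\<Prod>i\<in>UNIV. v j $ i - u j $ i)) powr (1 / real CARD('d)))"
  proof (cases "Jintegrand f \<gamma> integrable_on {0..1}")
    case False
    then have "Jfun f \<gamma> = 0" unfolding Jfun_eq_integral by (rule not_integrable_integral)
    then show ?thesis by (simp add: sum_nonneg)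
  next
    case True
    have "Jfun f \<gamma> = (\<Sum>j<K. I j)"
      using integral_sorted_partition[of ts "Jintegrand f \<gamma>"] True part(1-4)
      unfolding Jfun_eq_integral I_def K_def by simp
    also have "\<dots> = (\<Sum>j\<in>G. I j) + (\<Sum>j\<in>{..<K} - G. I j)"
      by (subst sum.subset_diff[of G]) (auto simp: G_def add.commute)
    also have "(\<Sum>j\<in>{..<K} - G. I j) \<le> 0"
    proof (rule sum_nonpos)
      fix j assume j: "j \<in> {..<K} - G"
      then have pr: "0 \<le> ts ! j" "ts ! j < ts ! Suc j" "ts ! Suc j \<le> 1" using step by auto
      have Fi: "Jintegrand f \<gamma> integrable_on {ts ! j..ts ! (Suc j)}"
        by (rule integrable_subinterval_real[OF True]) (use pr in auto)
      have "\<forall>t\<in>crossings \<gamma> L. \<not> (ts ! j < t \<and> t < ts ! Suc j)"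
        using part(7) j unfolding K_def by auto
      from integral_between_crossings[OF adm L pc fnn pr this Fi]
      show "I j \<le> 0" using j unfolding G_def P_def I_def u_def v_def by auto
    qed
    also have "(\<Sum>j\<in>G. I j) \<le> (\<Sum>j\<in>G. (a j * (\<Prod>i\<in>UNIV. v j $ i - u j $ i)) powr (1 / real CARD('d)))"
      by (rule sum_mono) (use aP in \<open>auto simp: P_def\<close>)
    finally show ?thesis by simp
  qed
  have "finite G" unfolding G_def by simp
  then show ?thesis
    by (intro exI[of _ u] exI[of _ v] exI[of _ a] exI[of _ G]) (use ord J aP in \<open>auto simp: P_def\<close>)
qed

lemma AE_liminf_ge_Jfun:
  fixes M :: "'a measure" and X :: "nat \<Rightarrow> 'a \<Rightarrow> real^'d"
    and f :: "real^'d \<Rightarrow> real" and L :: nat and c :: real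
  assumes L: "L \<ge> 1" and fnn: "\<forall>x\<in>unit_cube. f x \<ge> 0" and pc: "piecewise_const L f"
    and M: "prob_space M" and ind: "prob_space.indep_vars M (\<lambda>_. borel) X UNIV"
    and dis: "\<And>i. distributed M lborel (X i) (\<lambda>x. ennreal (ext0 f x))"
    and cd: "is_cd TYPE('d) c" and adm: "admissible \<gamma>"
  shows "AE \<omega> in M. liminf (\<lambda>n. ereal (real n powr (- 1 / real CARD('d)) *
                      real (lchain ((\<lambda>i. X i \<omega>) ` {..<n})))) \<ge> ereal (c * Jfun f \<gamma>)"
proof -
  obtain u v :: "nat \<Rightarrow> real^'d" and a :: "nat \<Rightarrow> real" and G :: "nat set" where G: "finite G"
    and boxes: "\<forall>j\<in>G. (\<forall>i. u j $ i < v j $ i) \<and> a j > 0 \<and> (\<forall>x\<in>box (u j) (v j). ext0 f x = a j)"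
    and ord: "\<forall>j\<in>G. \<forall>j'\<in>G. j < j' \<longrightarrow> (\<forall>i. v j $ i \<le> u j' $ i)"
    and J: "Jfun f \<gamma> \<le> (\<Sum>j\<in>G. (a j * (\<Prod>i\<in>UNIV. v j $ i - u j $ i)) powr (1 / real CARD('d)))"
    using Jfun_le_sum_boxes[OF adm L pc fnn] by blast
  have c: "c > 0" using cd unfolding is_cd_def by simp
  define r where "r n = real n powr (- 1 / real CARD('d))" for n :: nat
  define pts where "pts \<omega> n = (\<lambda>i. X i \<omega>) ` {..<n}" for \<omega> n
  define b where "b j = c * (a j * (\<Prod>i\<in>UNIV. v j $ i - u j $ i)) powr (1 / real CARD('d))" for j
  have "AE \<omega> in M. \<forall>j\<in>G. ereal (b j) \<le> liminf (\<lambda>n. ereal (r n * lchain (pts \<omega> n \<inter> box (u j) (v j))))"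
    using G boxes unfolding b_def r_def pts_def
    by (intro AE_finite_allI AE_liminf_lchain_box[OF M ind dis cd]) auto
  then show ?thesis
  proof (rule AE_mp, intro AE_I2 impI)
    fix \<omega> assume box_bound: "\<forall>j\<in>G. ereal (b j) \<le> liminf (\<lambda>n. ereal (r n * lchain (pts \<omega> n \<inter> box (u j) (v j))))"
    have "c * Jfun f \<gamma> \<le> c * (\<Sum>j\<in>G. (a j * (\<Prod>i\<in>UNIV. v j $ i - u j $ i)) powr (1 / real CARD('d)))"
      using J c by (intro mult_left_mono) auto
    then have "ereal (c * Jfun f \<gamma>) \<le> (\<Sum>j\<in>G. ereal (b j))"
      by (simp add: b_def sum_distrib_left)
    also have "\<dots> \<le> (\<Sum>j\<in>G. liminf (\<lambda>n. ereal (r n * lchain (pts \<omega> n \<inter> box (u j) (v j)))))"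
      using box_bound by (intro sum_mono) auto
    also have "\<dots> \<le> liminf (\<lambda>n. \<Sum>j\<in>G. ereal (r n * lchain (pts \<omega> n \<inter> box (u j) (v j))))"
      by (rule sum_Liminf_le_Liminf_sum[OF _ G]) (auto simp: r_def)
    also have "\<dots> \<le> liminf (\<lambda>n. ereal (r n * lchain (pts \<omega> n)))"
    proof (intro Liminf_mono always_eventually allI)
      fix n
      have "(\<Sum>j\<in>G. lchain (pts \<omega> n \<inter> box (u j) (v j))) \<le> lchain (pts \<omega> n)"
        using ord by (intro sum_lchain_boxes_le_lchain[OF _ G]) (auto simp: pts_def)
      then have "(\<Sum>j\<in>G. real (lchain (pts \<omega> n \<inter> box (u j) (v j)))) \<le> lchain (pts \<omega> n)"
        by (metis of_nat_le_iff of_nat_sum)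
      then have "r n * (\<Sum>j\<in>G. real (lchain (pts \<omega> n \<inter> box (u j) (v j)))) \<le> r n * lchain (pts \<omega> n)"
        by (intro mult_left_mono) (auto simp: r_def)
      then show "(\<Sum>j\<in>G. ereal (r n * lchain (pts \<omega> n \<inter> box (u j) (v j)))) \<le> ereal (r n * lchain (pts \<omega> n))"
        by (simp add: sum_distrib_left)
    qed
    finally show "ereal (c * Jfun f \<gamma>) \<le> liminf (\<lambda>n. ereal (real n powr (- 1 / real CARD('d)) *
                      real (lchain ((\<lambda>i. X i \<omega>) ` {..<n}))))"
      unfolding r_def pts_def .
  qed
qed

theorem theorem3p1:
  fixes M :: "'a measure" and X :: "nat \<Rightarrow> 'a \<Rightarrow> real^'d"
    and f :: "real^'d \<Rightarrow> real" and L :: nat and c :: real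
  assumes "CARD('d) \<ge> 2"
    and "L \<ge> 1"
    and "\<forall>x\<in>unit_cube. f x \<ge> 0"
    and "piecewise_const L f"
    and "(\<integral>\<^sup>+ x. ennreal (ext0 f x) \<partial>lborel) = 1"
    and "prob_space M"
    and "prob_space.indep_vars M (\<lambda>_. borel) X UNIV"
    and "\<And>i. distributed M lborel (X i) (\<lambda>x. ennreal (ext0 f x))"
    and "is_cd TYPE('d) c"
  shows "AE \<omega> in M. liminf (\<lambda>n. ereal (real n powr (- 1 / real CARD('d)) *
                      real (lchain ((\<lambda>i. X i \<omega>) ` {..<n}))))
                   \<ge> ereal (c * Jbar f)"
proof -
  have "\<And>\<gamma>. admissible \<gamma> \<Longrightarrow> AE \<omega> in M. ereal (c * Jfun f \<gamma>) \<le>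
      liminf (\<lambda>n. ereal (real n powr (- 1 / real CARD('d)) * real (lchain ((\<lambda>i. X i \<omega>) ` {..<n}))))"
    using AE_liminf_ge_Jfun[OF assms(2-4,6-9)] by blast
  moreover have "c > 0" using assms(9) unfolding is_cd_def by simp
  ultimately show ?thesis
    unfolding Jbar_def using admissible_diagonal by (intro AE_liminf_ge_SUP) auto
qed

end
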